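(* Let $\mathcal C$ be a $(2,1)$-category, $\mathcal A,\mathcal B$ arrowy $2$-subcategories, $\mathcal D$ a $2$-category, and $(F_{\mathcal A},F_{\mathcal B},G)$ an object of $\mathrm{GD}_{\mathcal A,\mathcal B}(\mathcal C,\mathcal D)$ with common object map $F_0$. For a morphism $f\colon X\to Y$ of $\mathcal A\cap\mathcal B$, let $E_f$ be the $(\mathcal A,\mathcal B)$-square with $b=f$, $q=f$, $a=1_Y$, $p=1_Y$ and identity $2$-cell, and define $\rho(f)$ as the composite $F_{\mathcal B}(f)\cong F_{\mathcal A}(1_Y)F_{\mathcal B}(f)\xRightarrow{G_{E_f}}F_{\mathcal B}(1_Y)F_{\mathcal A}(f)\cong F_{\mathcal A}(f)$. Then $\rho$, with identity components $\rho(X)=1_{F_0X}$ and $2$-cells $\rho(f)$, is a pseudonatural transformation $F_{\mathcal B}|_{\mathcal A\cap\mathcal B}\to F_{\mathcal A}|_{\mathcal A\cap\mathcal B}$ which is invertible in $\mathrm{PsFun}(\mathcal A\cap\mathcal B,\mathcal D)$. Moreover: (c) for every $(\mathcal A,\mathcal B)$-square $D$ (edges $b\colon X\to Y$, $a\colon Z\to W$, $q\colon X\to Z$, $p\colon Y\to W$, $\alpha\colon aq\Rightarrow pb$) with $p,q$ in $\mathcal A\cap\mathcal B$, the composite $F_{\mathcal A}(a)F_{\mathcal B}(q)\xRightarrow{\rho(q)}F_{\mathcal A}(a)F_{\mathcal A}(q)\cong F_{\mathcal A}(aq)\xRightarrow{F_{\mathcal A}(\alpha)}F_{\mathcal A}(pb)$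 equals $F_{\mathcal A}(a)F_{\mathcal B}(q)\xRightarrow{G_D}F_{\mathcal B}(p)F_{\mathcal A}(b)\xRightarrow{\rho(p)}F_{\mathcal A}(p)F_{\mathcal A}(b)\cong F_{\mathcal A}(pb)$; (c$'$) for every such square with $a,b$ in $\mathcal A\cap\mathcal B$, the composite $F_{\mathcal A}(a)F_{\mathcal B}(q)\xRightarrow{\rho(a)^{-1}}F_{\mathcal B}(a)F_{\mathcal B}(q)\cong F_{\mathcal B}(aq)\xRightarrow{F_{\mathcal B}(\alpha)}F_{\mathcal B}(pb)$ equals $F_{\mathcal A}(a)F_{\mathcal B}(q)\xRightarrow{G_D}F_{\mathcal B}(p)F_{\mathcal A}(b)\xRightarrow{\rho(b)^{-1}}F_{\mathcal B}(p)F_{\mathcal B}(b)\cong F_{\mathcal B}(pb)$.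
   Context: A $(2,1)$-category is a $2$-category whose $2$-cells are all invertible; an arrowy $2$-subcategory has all objects and is full on $2$-cells (hom-inclusions fully faithful and injective on objects). $\cong$ denotes coherence constraints of pseudofunctors; composition is juxtaposition. An $(\mathcal A,\mathcal B)$-square consists of $b\colon X\to Y$, $a\colon Z\to W$ in $\mathcal A$, $q\colon X\to Z$, $p\colon Y\to W$ in $\mathcal B$, and a $2$-cell $\alpha\colon aq\Rightarrow pb$. $\mathrm{GD}_{\mathcal A,\mathcal B}(\mathcal C,\mathcal D)$: objects are triples $(F_{\mathcal A},F_{\mathcal B},G)$ with $F_{\mathcal A}\colon\mathcal A\to\mathcal D$, $F_{\mathcal B}\colon\mathcal B\to\mathcal D$ pseudofunctors with the same object map and $G_D\colon F_{\mathcal A}(a)F_{\mathcal B}(q)\Rightarrow F_{\mathcal B}(p)F_{\mathcal A}(b)$ invertible $2$-cells for all $(\mathcal A,\mathcal B)$-squares $D$, satisfying: (a) for squares with $q=1_X,p=1_Y$, $\alpha\colon a\Rightarrow b$: $F_{\mathcal A}(a)\cong F_{\mathcal A}(a)F_{\mathcal B}(1_X)\xRightarrow{G_D}F_{\mathcal B}(1_Y)F_{\mathcal A}(b)\cong F_{\mathcal A}(b)$ equals $F_{\mathcal A}(\alpha)$; (a$'$) for squares with $b=1_X$, $a=1_Y$, $\alpha\colon q\Rightarrow p$: $F_{\mathcal B}(q)\cong F_{\mathcal A}(1_Y)F_{\mathcal B}(q)\xRightarrow{G_D}F_{\mathcal B}(p)F_{\mathcal A}(1_X)\cong F_{\mathcal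 B}(p)$ equals $F_{\mathcal B}(\alpha)$; (b) for vertically composable squares $D$ (edges $c_1,c_2,q,p$, $\alpha\colon c_2q\Rightarrow pc_1$) and $D'$ (edges $c_2,c_3,q',p'$, $\alpha'\colon c_3q'\Rightarrow p'c_2$) with composite $D''$ (edges $c_1,c_3,q'q,p'p$, $2$-cell $(p'\alpha)(\alpha'q)$): $G_D\circ G_{D'}$ followed by $F_{\mathcal B}(p')F_{\mathcal B}(p)\cong F_{\mathcal B}(p'p)$ equals $G_{D''}$ preceded by $F_{\mathcal B}(q')F_{\mathcal B}(q)\cong F_{\mathcal B}(q'q)$; (b$'$) for horizontally composable squares $D$ (edges $b,a,p_1,p_2$, $\alpha\colon ap_1\Rightarrow p_2b$) and $D'$ (edges $b',a',p_2,p_3$, $\alpha'\colon a'p_2\Rightarrow p_3b'$) with composite $D''$ (edges $b'b,a'a,p_1,p_3$, $2$-cell $(\alpha'b)(a'\alpha)$): $G_{D'}\circ G_D$ followed by $F_{\mathcal A}(b')F_{\mathcal A}(b)\cong F_{\mathcal A}(b'b)$ equals $G_{D''}$ preceded by $F_{\mathcal A}(a')F_{\mathcal A}(a)\cong F_{\mathcal A}(a'a)$. A pseudonatural transformation $\rho\colon F\to F'$ has components $\rho(X)$ and invertible $2$-cells $\rho(f)\colon\rho(Y)F(f)\Rightarrow F'(f)\rho(X)$. *)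

theory Defs
  imports Main
begin

text \<open>A (strict) 2-category, presented by its sets of objects, 1-cells and 2-cells,
together with sources/targets and the identities and compositions.
cmp g f is g after f; vcmp b a is b after a (vertical); hcmp b a is horizontal
composition with a: f => f' (X to Y), b: g => g' (Y to Z), giving g f => g' f'.\<close>

record ('o,'m,'c) tcat =
  Obj  :: "'o set"
  Mor  :: "'m set"
  Cel  :: "'c set"
  src  :: "'m \<Rightarrow> 'o"
  trg  :: "'m \<Rightarrow> 'o"
  dom2 :: "'c \<Rightarrow> 'm"
  cod2 :: "'c \<Rightarrow> 'm"
  idm  :: "'o \<Rightarrow> 'm"
  cmp  :: "'m \<Rightarrow> 'm \<Rightarrow> 'm"
  idc  :: "'m \<Rightarrow> 'c"
  vcmp :: "'c \<Rightarrow> 'c \<Rightarrow> 'c"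
  hcmp :: "'c \<Rightarrow> 'c \<Rightarrow> 'c"

definition twocat :: "('o,'m,'c,'x) tcat_scheme \<Rightarrow> bool" where
  "twocat C \<longleftrightarrow>
    (\<forall>f\<in>Mor C. src C f \<in> Obj C \<and> trg C f \<in> Obj C) \<and>
    (\<forall>X\<in>Obj C. idm C X \<in> Mor C \<and> src C (idm C X) = X \<and> trg C (idm C X) = X) \<and>
    (\<forall>f\<in>Mor C. \<forall>g\<in>Mor C. trg C f = src C g \<longrightarrow>
        cmp C g f \<in> Mor C \<and> src C (cmp C g f) = src C f \<and> trg C (cmp C g f) = trg C g) \<and>
    (\<forall>f\<in>Mor C. \<forall>g\<in>Mor C. \<forall>h\<in>Mor C. trg C f = src C g \<longrightarrow> trg C g = src C h \<longrightarrow>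
        cmp C h (cmp C g f) = cmp C (cmp C h g) f) \<and>
    (\<forall>f\<in>Mor C. cmp C f (idm C (src C f)) = f \<and> cmp C (idm C (trg C f)) f = f) \<and>
    (\<forall>a\<in>Cel C. dom2 C a \<in> Mor C \<and> cod2 C a \<in> Mor C \<and>
        src C (dom2 C a) = src C (cod2 C a) \<and> trg C (dom2 C a) = trg C (cod2 C a)) \<and>
    (\<forall>f\<in>Mor C. idc C f \<in> Cel C \<and> dom2 C (idc C f) = f \<and> cod2 C (idc C f) = f) \<and>
    (\<forall>a\<in>Cel C. \<forall>b\<in>Cel C. cod2 C a = dom2 C b \<longrightarrow>
        vcmp C b a \<in> Cel C \<and> dom2 C (vcmp C b a) = dom2 C a \<and> cod2 C (vcmp C b a) = cod2 C b) \<and>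
    (\<forall>a\<in>Cel C. \<forall>b\<in>Cel C. \<forall>c\<in>Cel C. cod2 C a = dom2 C b \<longrightarrow> cod2 C b = dom2 C c \<longrightarrow>
        vcmp C c (vcmp C b a) = vcmp C (vcmp C c b) a) \<and>
    (\<forall>a\<in>Cel C. vcmp C a (idc C (dom2 C a)) = a \<and> vcmp C (idc C (cod2 C a)) a = a) \<and>
    (\<forall>a\<in>Cel C. \<forall>b\<in>Cel C. trg C (dom2 C a) = src C (dom2 C b) \<longrightarrow>
        hcmp C b a \<in> Cel C \<and> dom2 C (hcmp C b a) = cmp C (dom2 C b) (dom2 C a) \<and>
        cod2 C (hcmp C b a) = cmp C (cod2 C b) (cod2 C a)) \<and>
    (\<forall>a\<in>Cel C. \<forall>b\<in>Cel C. \<forall>c\<in>Cel C.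
        trg C (dom2 C a) = src C (dom2 C b) \<longrightarrow> trg C (dom2 C b) = src C (dom2 C c) \<longrightarrow>
        hcmp C c (hcmp C b a) = hcmp C (hcmp C c b) a) \<and>
    (\<forall>a\<in>Cel C. hcmp C a (idc C (idm C (src C (dom2 C a)))) = a \<and>
                hcmp C (idc C (idm C (trg C (dom2 C a)))) a = a) \<and>
    (\<forall>f\<in>Mor C. \<forall>g\<in>Mor C. trg C f = src C g \<longrightarrow>
        hcmp C (idc C g) (idc C f) = idc C (cmp C g f)) \<and>
    (\<forall>a\<in>Cel C. \<forall>a'\<in>Cel C. \<forall>b\<in>Cel C. \<forall>b'\<in>Cel C.
        cod2 C a = dom2 C a' \<longrightarrow> cod2 C b = dom2 C b' \<longrightarrow> trg C (dom2 C a) = src C (dom2 C b) \<longrightarrow>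
        hcmp C (vcmp C b' b) (vcmp C a' a) = vcmp C (hcmp C b' a') (hcmp C b a))"

definition is_inverse2 :: "('o,'m,'c,'x) tcat_scheme \<Rightarrow> 'c \<Rightarrow> 'c \<Rightarrow> bool" where
  "is_inverse2 C a b \<longleftrightarrow> b \<in> Cel C \<and> dom2 C b = cod2 C a \<and> cod2 C b = dom2 C a \<and>
     vcmp C b a = idc C (dom2 C a) \<and> vcmp C a b = idc C (cod2 C a)"

definition iso2 :: "('o,'m,'c,'x) tcat_scheme \<Rightarrow> 'c \<Rightarrow> bool" where
  "iso2 C a \<longleftrightarrow> a \<in> Cel C \<and> (\<exists>b. is_inverse2 C a b)"

definition inv2 :: "('o,'m,'c,'x) tcat_scheme \<Rightarrow> 'c \<Rightarrow> 'c" where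
  "inv2 C a = (SOME b. is_inverse2 C a b)"

definition two_one_cat :: "('o,'m,'c,'x) tcat_scheme \<Rightarrow> bool" where
  "two_one_cat C \<longleftrightarrow> twocat C \<and> (\<forall>a\<in>Cel C. iso2 C a)"

text \<open>An arrowy 2-subcategory: contains all objects, is full on 2-cells.  Such a
sub-2-category is determined by its set of 1-cells A (closed under identities and
composition); its 2-cells are all 2-cells of C between 1-cells of A.\<close>

definition arrowy_sub :: "('o,'m,'c,'x) tcat_scheme \<Rightarrow> 'm set \<Rightarrow> bool" where
  "arrowy_sub C A \<longleftrightarrow> A \<subseteq> Mor C \<and> (\<forall>X\<in>Obj C. idm C X \<in> A) \<and>
     (\<forall>f\<in>A. \<forall>g\<in>A. trg C f = src C g \<longrightarrow> cmp C g f \<in> A)"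

definition cells_in :: "('o,'m,'c,'x) tcat_scheme \<Rightarrow> 'm set \<Rightarrow> 'c set" where
  "cells_in C A = {a \<in> Cel C. dom2 C a \<in> A \<and> cod2 C a \<in> A}"

text \<open>Data of a pseudofunctor: object map, 1-cell map, 2-cell map,
composition constraints Pc g f : P1 g P1 f => P1 (g f) and
unit constraints Pu X : 1 => P1 (1_X).\<close>

record ('o,'m,'c,'p,'n,'d) psf =
  P0 :: "'o \<Rightarrow> 'p"
  P1 :: "'m \<Rightarrow> 'n"
  P2 :: "'c \<Rightarrow> 'd"
  Pc :: "'m \<Rightarrow> 'm \<Rightarrow> 'd"
  Pu :: "'o \<Rightarrow> 'd"

definition pseudofunctor ::
  "('o,'m,'c,'x) tcat_scheme \<Rightarrow> 'm set \<Rightarrow> ('p,'n,'d,'y) tcat_scheme \<Rightarrow>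
   ('o,'m,'c,'p,'n,'d) psf \<Rightarrow> bool" where
  "pseudofunctor C A D F \<longleftrightarrow>
    (\<forall>X\<in>Obj C. P0 F X \<in> Obj D) \<and>
    (\<forall>f\<in>A. P1 F f \<in> Mor D \<and> src D (P1 F f) = P0 F (src C f) \<and> trg D (P1 F f) = P0 F (trg C f)) \<and>
    (\<forall>a\<in>cells_in C A. P2 F a \<in> Cel D \<and> dom2 D (P2 F a) = P1 F (dom2 C a) \<and>
        cod2 D (P2 F a) = P1 F (cod2 C a)) \<and>
    (\<forall>f\<in>A. P2 F (idc C f) = idc D (P1 F f)) \<and>
    (\<forall>a\<in>cells_in C A. \<forall>b\<in>cells_in C A. cod2 C a = dom2 C b \<longrightarrow>
        P2 F (vcmp C b a) = vcmp D (P2 F b) (P2 F a)) \<and>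
    (\<forall>f\<in>A. \<forall>g\<in>A. trg C f = src C g \<longrightarrow>
        iso2 D (Pc F g f) \<and> dom2 D (Pc F g f) = cmp D (P1 F g) (P1 F f) \<and>
        cod2 D (Pc F g f) = P1 F (cmp C g f)) \<and>
    (\<forall>X\<in>Obj C. iso2 D (Pu F X) \<and> dom2 D (Pu F X) = idm D (P0 F X) \<and>
        cod2 D (Pu F X) = P1 F (idm C X)) \<and>
    (\<forall>a\<in>cells_in C A. \<forall>b\<in>cells_in C A. trg C (dom2 C a) = src C (dom2 C b) \<longrightarrow>
        vcmp D (Pc F (cod2 C b) (cod2 C a)) (hcmp D (P2 F b) (P2 F a)) =
        vcmp D (P2 F (hcmp C b a)) (Pc F (dom2 C b) (dom2 C a))) \<and>
    (\<forall>f\<in>A. \<forall>g\<in>A. \<forall>h\<in>A. trg C f = src C g \<longrightarrow> trg C g = src C h \<longrightarrow>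
        vcmp D (Pc F h (cmp C g f)) (hcmp D (idc D (P1 F h)) (Pc F g f)) =
        vcmp D (Pc F (cmp C h g) f) (hcmp D (Pc F h g) (idc D (P1 F f)))) \<and>
    (\<forall>f\<in>A. vcmp D (Pc F (idm C (trg C f)) f) (hcmp D (Pu F (trg C f)) (idc D (P1 F f)))
              = idc D (P1 F f) \<and>
            vcmp D (Pc F f (idm C (src C f))) (hcmp D (idc D (P1 F f)) (Pu F (src C f)))
              = idc D (P1 F f))"

definition pseudonat ::
  "('o,'m,'c,'x) tcat_scheme \<Rightarrow> 'm set \<Rightarrow> ('p,'n,'d,'y) tcat_scheme \<Rightarrow>
   ('o,'m,'c,'p,'n,'d) psf \<Rightarrow> ('o,'m,'c,'p,'n,'d) psf \<Rightarrow>
   ('o \<Rightarrow> 'n) \<Rightarrow> ('m \<Rightarrow> 'd) \<Rightarrow> bool" where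
  "pseudonat C A D F F' s0 s1 \<longleftrightarrow>
    pseudofunctor C A D F \<and> pseudofunctor C A D F' \<and>
    (\<forall>X\<in>Obj C. s0 X \<in> Mor D \<and> src D (s0 X) = P0 F X \<and> trg D (s0 X) = P0 F' X) \<and>
    (\<forall>f\<in>A. iso2 D (s1 f) \<and>
        dom2 D (s1 f) = cmp D (s0 (trg C f)) (P1 F f) \<and>
        cod2 D (s1 f) = cmp D (P1 F' f) (s0 (src C f))) \<and>
    (\<forall>a\<in>cells_in C A.
        vcmp D (s1 (cod2 C a)) (hcmp D (idc D (s0 (trg C (dom2 C a)))) (P2 F a)) =
        vcmp D (hcmp D (P2 F' a) (idc D (s0 (src C (dom2 C a))))) (s1 (dom2 C a))) \<and>
    (\<forall>f\<in>A. \<forall>g\<in>A. trg C f = src C g \<longrightarrow>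
        vcmp D (s1 (cmp C g f)) (hcmp D (idc D (s0 (trg C g))) (Pc F g f)) =
        vcmp D (hcmp D (Pc F' g f) (idc D (s0 (src C f))))
          (vcmp D (hcmp D (idc D (P1 F' g)) (s1 f))
                  (hcmp D (s1 g) (idc D (P1 F f))))) \<and>
    (\<forall>X\<in>Obj C.
        vcmp D (s1 (idm C X)) (hcmp D (idc D (s0 X)) (Pu F X)) =
        hcmp D (Pu F' X) (idc D (s0 X)))"

text \<open>Invertibility of a pseudonatural transformation as a 1-cell of the 2-category
PsFun: there is a pseudonatural transformation in the other direction whose
(vertical) composites with it, in both orders, are the identity transformations.
The composite t.s has components t0 X s0 X and 2-cells
(t1 f * 1) . (1 * s1 f); the identity transformation has components 1 and 2-cells 1.\<close>

definition invertible_pseudonat ::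
  "('o,'m,'c,'x) tcat_scheme \<Rightarrow> 'm set \<Rightarrow> ('p,'n,'d,'y) tcat_scheme \<Rightarrow>
   ('o,'m,'c,'p,'n,'d) psf \<Rightarrow> ('o,'m,'c,'p,'n,'d) psf \<Rightarrow>
   ('o \<Rightarrow> 'n) \<Rightarrow> ('m \<Rightarrow> 'd) \<Rightarrow> bool" where
  "invertible_pseudonat C A D F F' s0 s1 \<longleftrightarrow>
    pseudonat C A D F F' s0 s1 \<and>
    (\<exists>t0 t1. pseudonat C A D F' F t0 t1 \<and>
       (\<forall>X\<in>Obj C. cmp D (t0 X) (s0 X) = idm D (P0 F X) \<and> cmp D (s0 X) (t0 X) = idm D (P0 F' X)) \<and>
       (\<forall>f\<in>A.
          vcmp D (hcmp D (t1 f) (idc D (s0 (src C f)))) (hcmp D (idc D (t0 (trg C f))) (s1 f))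
            = idc D (P1 F f) \<and>
          vcmp D (hcmp D (s1 f) (idc D (t0 (src C f)))) (hcmp D (idc D (s0 (trg C f))) (t1 f))
            = idc D (P1 F' f)))"

definition ab_square ::
  "('o,'m,'c,'x) tcat_scheme \<Rightarrow> 'm set \<Rightarrow> 'm set \<Rightarrow> 'm \<Rightarrow> 'm \<Rightarrow> 'm \<Rightarrow> 'm \<Rightarrow> 'c \<Rightarrow> bool" where
  "ab_square C A B b a q p al \<longleftrightarrow>
     b \<in> A \<and> a \<in> A \<and> q \<in> B \<and> p \<in> B \<and>
     src C q = src C b \<and> src C p = trg C b \<and> src C a = trg C q \<and> trg C p = trg C a \<and>
     al \<in> Cel C \<and> dom2 C al = cmp C a q \<and> cod2 C al = cmp C p b"

text \<open>Objects (FA, FB, G) of GD_{A,B}(C,D); G b a q p al is the 2-cell G_D for the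
square D with edges b, a, q, p and 2-cell al.\<close>

definition GD_obj ::
  "('o,'m,'c,'x) tcat_scheme \<Rightarrow> 'm set \<Rightarrow> 'm set \<Rightarrow> ('p,'n,'d,'y) tcat_scheme \<Rightarrow>
   ('o,'m,'c,'p,'n,'d) psf \<Rightarrow> ('o,'m,'c,'p,'n,'d) psf \<Rightarrow>
   ('m \<Rightarrow> 'm \<Rightarrow> 'm \<Rightarrow> 'm \<Rightarrow> 'c \<Rightarrow> 'd) \<Rightarrow> bool" where
  "GD_obj C A B D FA FB G \<longleftrightarrow>
    pseudofunctor C A D FA \<and> pseudofunctor C B D FB \<and>
    (\<forall>X\<in>Obj C. P0 FA X = P0 FB X) \<and>
    (\<forall>b a q p al. ab_square C A B b a q p al \<longrightarrow>
        iso2 D (G b a q p al) \<and>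
        dom2 D (G b a q p al) = cmp D (P1 FA a) (P1 FB q) \<and>
        cod2 D (G b a q p al) = cmp D (P1 FB p) (P1 FA b)) \<and>
    \<comment> \<open>(a)\<close>
    (\<forall>b a al. ab_square C A B b a (idm C (src C b)) (idm C (trg C b)) al \<longrightarrow>
        vcmp D (hcmp D (inv2 D (Pu FB (trg C b))) (idc D (P1 FA b)))
          (vcmp D (G b a (idm C (src C b)) (idm C (trg C b)) al)
                  (hcmp D (idc D (P1 FA a)) (Pu FB (src C b))))
        = P2 FA al) \<and>
    \<comment> \<open>(a')\<close>
    (\<forall>q p al. ab_square C A B (idm C (src C q)) (idm C (trg C q)) q p al \<longrightarrow>
        vcmp D (hcmp D (idc D (P1 FB p)) (inv2 D (Pu FA (src C q))))
          (vcmp D (G (idm C (src C q)) (idm C (trg C q)) q p al)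
                  (hcmp D (Pu FA (trg C q)) (idc D (P1 FB q))))
        = P2 FB al) \<and>
    \<comment> \<open>(b) vertical pasting\<close>
    (\<forall>c1 c2 c3 q p q' p' al al'.
        ab_square C A B c1 c2 q p al \<longrightarrow> ab_square C A B c2 c3 q' p' al' \<longrightarrow>
        vcmp D (hcmp D (Pc FB p' p) (idc D (P1 FA c1)))
          (vcmp D (hcmp D (idc D (P1 FB p')) (G c1 c2 q p al))
                  (hcmp D (G c2 c3 q' p' al') (idc D (P1 FB q))))
        = vcmp D (G c1 c3 (cmp C q' q) (cmp C p' p)
                    (vcmp C (hcmp C (idc C p') al) (hcmp C al' (idc C q))))
                 (hcmp D (idc D (P1 FA c3)) (Pc FB q' q))) \<and>
    \<comment> \<open>(b') horizontal pasting\<close>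
    (\<forall>b a b' a' p1 p2 p3 al al'.
        ab_square C A B b a p1 p2 al \<longrightarrow> ab_square C A B b' a' p2 p3 al' \<longrightarrow>
        vcmp D (hcmp D (idc D (P1 FB p3)) (Pc FA b' b))
          (vcmp D (hcmp D (G b' a' p2 p3 al') (idc D (P1 FA b)))
                  (hcmp D (idc D (P1 FA a')) (G b a p1 p2 al)))
        = vcmp D (G (cmp C b' b) (cmp C a' a) p1 p3
                    (vcmp C (hcmp C al' (idc C b)) (hcmp C (idc C a') al)))
                 (hcmp D (Pc FA a' a) (idc D (P1 FB p1))))"

definition rho ::
  "('o,'m,'c,'x) tcat_scheme \<Rightarrow> ('p,'n,'d,'y) tcat_scheme \<Rightarrow>
   ('o,'m,'c,'p,'n,'d) psf \<Rightarrow> ('o,'m,'c,'p,'n,'d) psf \<Rightarrow>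
   ('m \<Rightarrow> 'm \<Rightarrow> 'm \<Rightarrow> 'm \<Rightarrow> 'c \<Rightarrow> 'd) \<Rightarrow> 'm \<Rightarrow> 'd" where
  "rho C D FA FB G f =
     vcmp D (hcmp D (inv2 D (Pu FB (trg C f))) (idc D (P1 FA f)))
       (vcmp D (G f (idm C (trg C f)) f (idm C (trg C f)) (idc C f))
               (hcmp D (Pu FA (trg C f)) (idc D (P1 FB f))))"

end

theory Submission
  imports Defs
begin

text \<open>
  The component \<open>\<rho>(f)\<close> is the \<open>G\<close>-cell of the degenerate square \<open>E\<^sub>f\<close>, and every claim is
  obtained by pasting squares.  For law (c), horizontal pasting (b') with \<open>E\<^sub>p\<close> on the right-hand
  side, and pasting combined with the unit axiom (a) on the left-hand side, reduce both sides
  to the \<open>G\<close>-cell of the square with edges \<open>p b, a, q, 1\<close>.  Naturality of \<open>\<rho>\<close> is (c)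
  for the square \<open>(1, 1, f, g, \<alpha>)\<close>, compatibility with composition comes from pasting the
  square \<open>(g f, g, f, 1, 1)\<close> onto \<open>E\<^sub>g\<close>, and axiom (a) on \<open>E\<^bsub>1\<^esub>\<close> gives the unit law.  As the
  components of \<open>\<rho>\<close> are identities and its 2-cells invertible, the pointwise inverse is a
  pseudonatural inverse.  Law (c') follows by computing the \<open>G\<close>-cell of the square with edges
  \<open>1, a, q, p b\<close> in two ways, one of them using (c) for the transposed square \<open>(1, b, 1, b, 1)\<close>.
\<close>

locale two_category =
  fixes D :: "('p,'n,'d,'y) tcat_scheme"
  assumes twocat: "twocat D"
begin

abbreviation vcomp (infixr "\<bullet>" 55) where "b \<bullet> a \<equiv> vcmp D b a"
abbreviation hcomp (infixr "\<star>" 60) where "b \<star> a \<equiv> hcmp D b a"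
abbreviation comp (infixr "\<diamond>" 65) where "g \<diamond> f \<equiv> cmp D g f"
abbreviation id2 where "id2 f \<equiv> idc D f"

lemma Mor_src_trg [simp]: "f \<in> Mor D \<Longrightarrow> src D f \<in> Obj D \<and> trg D f \<in> Obj D"
  using twocat unfolding twocat_def by (elim conjE) blast

lemma idm_props [simp]:
  "X \<in> Obj D \<Longrightarrow> idm D X \<in> Mor D \<and> src D (idm D X) = X \<and> trg D (idm D X) = X"
  using twocat unfolding twocat_def by (elim conjE) blast

lemma comp_props [simp]:
  "f \<in> Mor D \<Longrightarrow> g \<in> Mor D \<Longrightarrow> trg D f = src D g \<Longrightarrow>
   g \<diamond> f \<in> Mor D \<and> src D (g \<diamond> f) = src D f \<and> trg D (g \<diamond> f) = trg D g"
  using twocat unfolding twocat_def by (elim conjE) blast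

lemma comp_assoc [simp]:
  "\<lbrakk>f \<in> Mor D; g \<in> Mor D; h \<in> Mor D; trg D f = src D g; trg D g = src D h\<rbrakk> \<Longrightarrow>
   (h \<diamond> g) \<diamond> f = h \<diamond> (g \<diamond> f)"
  using twocat unfolding twocat_def by (elim conjE) (simp only: Ball_def)

lemma comp_idm_right [simp]: "f \<in> Mor D \<Longrightarrow> src D f = X \<Longrightarrow> f \<diamond> idm D X = f"
  using twocat unfolding twocat_def by (elim conjE) (hypsubst, simp only: Ball_def)

lemma comp_idm_left [simp]: "f \<in> Mor D \<Longrightarrow> trg D f = Y \<Longrightarrow> idm D Y \<diamond> f = f"
  using twocat unfolding twocat_def by (elim conjE) (hypsubst, simp only: Ball_def)

lemma Cel_props [simp]:
  "a \<in> Cel D \<Longrightarrow> dom2 D a \<in> Mor D \<and> cod2 D a \<in> Mor D \<and>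
     src D (cod2 D a) = src D (dom2 D a) \<and> trg D (cod2 D a) = trg D (dom2 D a)"
  using twocat unfolding twocat_def by (elim conjE) (simp only: Ball_def)

lemma id2_props [simp]: "f \<in> Mor D \<Longrightarrow> id2 f \<in> Cel D \<and> dom2 D (id2 f) = f \<and> cod2 D (id2 f) = f"
  using twocat unfolding twocat_def by (elim conjE) blast

lemma vcomp_props [simp]:
  "a \<in> Cel D \<Longrightarrow> b \<in> Cel D \<Longrightarrow> cod2 D a = dom2 D b \<Longrightarrow>
   b \<bullet> a \<in> Cel D \<and> dom2 D (b \<bullet> a) = dom2 D a \<and> cod2 D (b \<bullet> a) = cod2 D b"
  using twocat unfolding twocat_def by (elim conjE) blast

lemma vcomp_assoc [simp]:
  "\<lbrakk>a \<in> Cel D; b \<in> Cel D; c \<in> Cel D; cod2 D a = dom2 D b; cod2 D b = dom2 D c\<rbrakk> \<Longrightarrow>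
   (c \<bullet> b) \<bullet> a = c \<bullet> (b \<bullet> a)"
  using twocat unfolding twocat_def by (elim conjE) (simp only: Ball_def)

lemma vcomp_id2_right [simp]: "a \<in> Cel D \<Longrightarrow> dom2 D a = f \<Longrightarrow> a \<bullet> id2 f = a"
  using twocat unfolding twocat_def by (elim conjE) (hypsubst, simp only: Ball_def)

lemma vcomp_id2_left [simp]: "a \<in> Cel D \<Longrightarrow> cod2 D a = g \<Longrightarrow> id2 g \<bullet> a = a"
  using twocat unfolding twocat_def by (elim conjE) (hypsubst, simp only: Ball_def)

lemma hcomp_props [simp]:
  "a \<in> Cel D \<Longrightarrow> b \<in> Cel D \<Longrightarrow> trg D (dom2 D a) = src D (dom2 D b) \<Longrightarrow>
   b \<star> a \<in> Cel D \<and> dom2 D (b \<star> a) = dom2 D b \<diamond> dom2 D a \<and>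
   cod2 D (b \<star> a) = cod2 D b \<diamond> cod2 D a"
  using twocat unfolding twocat_def by (elim conjE) blast

lemma hcomp_assoc [simp]:
  "\<lbrakk>a \<in> Cel D; b \<in> Cel D; c \<in> Cel D;
    trg D (dom2 D a) = src D (dom2 D b); trg D (dom2 D b) = src D (dom2 D c)\<rbrakk> \<Longrightarrow>
   (c \<star> b) \<star> a = c \<star> (b \<star> a)"
  using twocat unfolding twocat_def by (elim conjE) (simp only: Ball_def)

lemma hcomp_id2_idm:
  "a \<in> Cel D \<Longrightarrow>
   a \<star> id2 (idm D (src D (dom2 D a))) = a \<and> id2 (idm D (trg D (dom2 D a))) \<star> a = a"
  using twocat unfolding twocat_def by (elim conjE) fast

lemma hcomp_id2_idm_right [simp]: "a \<in> Cel D \<Longrightarrow> src D (dom2 D a) = X \<Longrightarrow> a \<star> id2 (idm D X) = a"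
  using hcomp_id2_idm by blast

lemma hcomp_id2_idm_left [simp]: "a \<in> Cel D \<Longrightarrow> trg D (dom2 D a) = Y \<Longrightarrow> id2 (idm D Y) \<star> a = a"
  using hcomp_id2_idm by blast

lemma hcomp_id2 [simp]:
  "f \<in> Mor D \<Longrightarrow> g \<in> Mor D \<Longrightarrow> trg D f = src D g \<Longrightarrow> id2 g \<star> id2 f = id2 (g \<diamond> f)"
  using twocat unfolding twocat_def by (elim conjE) (simp only: Ball_def)

lemma interchange:
  "\<lbrakk>a \<in> Cel D; a' \<in> Cel D; b \<in> Cel D; b' \<in> Cel D;
    cod2 D a = dom2 D a'; cod2 D b = dom2 D b'; trg D (dom2 D a) = src D (dom2 D b)\<rbrakk> \<Longrightarrow>
   (b' \<bullet> b) \<star> (a' \<bullet> a) = (b' \<star> a') \<bullet> (b \<star> a)"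
  using twocat unfolding twocat_def by (elim conjE) (simp only: Ball_def)

lemma hcomp_id2_comp [simp]:
  assumes "f \<in> Mor D" "g \<in> Mor D" "trg D f = src D g" "x \<in> Cel D" "trg D (dom2 D x) = src D f"
  shows "id2 (g \<diamond> f) \<star> x = id2 g \<star> id2 f \<star> x"
  using assms hcomp_assoc[of x "id2 f" "id2 g"] by simp

lemma iso2_inverse: "iso2 D a \<Longrightarrow> is_inverse2 D a (inv2 D a)"
  unfolding iso2_def inv2_def by (metis someI)

lemma iso2_Cel [simp]: "iso2 D a \<Longrightarrow> a \<in> Cel D"
  unfolding iso2_def by auto

lemma inv2_props [simp]:
  assumes "iso2 D a"
  shows "inv2 D a \<in> Cel D" "dom2 D (inv2 D a) = cod2 D a" "cod2 D (inv2 D a) = dom2 D a"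
  using iso2_inverse[OF assms] unfolding is_inverse2_def by auto

lemma inv2_comp_left [simp]: "iso2 D a \<Longrightarrow> inv2 D a \<bullet> a = id2 (dom2 D a)"
  and inv2_comp_right [simp]: "iso2 D a \<Longrightarrow> a \<bullet> inv2 D a = id2 (cod2 D a)"
  using iso2_inverse unfolding is_inverse2_def by auto

lemma inv2_comp_left_assoc [simp]:
  assumes "iso2 D a" "x \<in> Cel D" "cod2 D x = dom2 D a"
  shows "inv2 D a \<bullet> a \<bullet> x = x"
  using assms vcomp_assoc[of x a "inv2 D a"] by simp

lemma inv2_comp_right_assoc [simp]:
  assumes "iso2 D a" "x \<in> Cel D" "cod2 D x = cod2 D a"
  shows "a \<bullet> inv2 D a \<bullet> x = x"
  using assms vcomp_assoc[of x "inv2 D a" a] by simp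

lemma inv2_unique:
  assumes "iso2 D a" "b \<in> Cel D" "dom2 D b = cod2 D a" "b \<bullet> a = id2 (dom2 D a)"
  shows "inv2 D a = b"
proof -
  have "inv2 D a = (b \<bullet> a) \<bullet> inv2 D a" using assms by (simp del: vcomp_assoc)
  also have "\<dots> = b \<bullet> (a \<bullet> inv2 D a)" using assms by (intro vcomp_assoc) auto
  also have "\<dots> = b" using assms by simp
  finally show ?thesis .
qed

lemma iso2_id2 [simp]: "f \<in> Mor D \<Longrightarrow> iso2 D (id2 f)"
  unfolding iso2_def is_inverse2_def by (intro conjI exI[of _ "id2 f"]) simp_all

lemma iso2_inv2 [simp]: "iso2 D a \<Longrightarrow> iso2 D (inv2 D a)"
  unfolding iso2_def[of D "inv2 D a"] is_inverse2_def by (intro conjI exI[of _ a]) simp_all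

lemma iso2_vcomp [simp]:
  "iso2 D a \<Longrightarrow> iso2 D b \<Longrightarrow> cod2 D a = dom2 D b \<Longrightarrow> iso2 D (b \<bullet> a)"
  unfolding iso2_def[of D "b \<bullet> a"] is_inverse2_def
  by (intro conjI exI[of _ "inv2 D a \<bullet> inv2 D b"]) simp_all

lemma inv2_hcomp_comp:
  assumes "iso2 D a" "iso2 D b" "trg D (dom2 D a) = src D (dom2 D b)"
  shows "(inv2 D b \<star> inv2 D a) \<bullet> (b \<star> a) = id2 (dom2 D (b \<star> a))"
    and "(b \<star> a) \<bullet> (inv2 D b \<star> inv2 D a) = id2 (cod2 D (b \<star> a))"
  using assms interchange[of a "inv2 D a" b "inv2 D b"] interchange[of "inv2 D a" a "inv2 D b" b]
  by simp_all

lemma iso2_hcomp [simp]: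
  "iso2 D a \<Longrightarrow> iso2 D b \<Longrightarrow> trg D (dom2 D a) = src D (dom2 D b) \<Longrightarrow> iso2 D (b \<star> a)"
  unfolding iso2_def[of D "b \<star> a"] is_inverse2_def
  by (intro conjI exI[of _ "inv2 D b \<star> inv2 D a"]) (simp_all add: inv2_hcomp_comp)

lemma inv2_hcomp [simp]:
  "iso2 D a \<Longrightarrow> iso2 D b \<Longrightarrow> trg D (dom2 D a) = src D (dom2 D b) \<Longrightarrow>
   inv2 D (b \<star> a) = inv2 D b \<star> inv2 D a"
  by (rule inv2_unique) (simp_all add: inv2_hcomp_comp)

lemma iso2_cancel_right:
  assumes "iso2 D w" "x \<in> Cel D" "y \<in> Cel D" "dom2 D x = cod2 D w" "dom2 D y = cod2 D w"
    and "x \<bullet> w = y \<bullet> w"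
  shows "x = y"
proof -
  have "x = (x \<bullet> w) \<bullet> inv2 D w" using assms by (subst vcomp_assoc) auto
  also have "\<dots> = (y \<bullet> w) \<bullet> inv2 D w" using assms by (simp del: vcomp_assoc)
  also have "\<dots> = y" using assms by simp
  finally show ?thesis .
qed

lemma iso2_cancel_left:
  assumes "iso2 D w" "x \<in> Cel D" "y \<in> Cel D" "cod2 D x = dom2 D w" "cod2 D y = dom2 D w"
    and "w \<bullet> x = w \<bullet> y"
  shows "x = y"
proof -
  have "x = inv2 D w \<bullet> w \<bullet> x" using assms(1-5) by simp
  also have "\<dots> = inv2 D w \<bullet> w \<bullet> y" using assms by (simp del: inv2_comp_left_assoc)
  also have "\<dots> = y" using assms(1-5) by simp
  finally show ?thesis .
qed

lemma inv2_conjugate: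
  assumes "iso2 D r" "iso2 D r'" "x \<in> Cel D" "y \<in> Cel D"
    and "dom2 D x = cod2 D r" "cod2 D x = cod2 D r'" "dom2 D y = dom2 D r" "cod2 D y = dom2 D r'"
    and "x \<bullet> r = r' \<bullet> y"
  shows "inv2 D r' \<bullet> x = y \<bullet> inv2 D r"
proof -
  have "inv2 D r' \<bullet> x = inv2 D r' \<bullet> (x \<bullet> r) \<bullet> inv2 D r" using assms(1-8) by simp
  also have "\<dots> = inv2 D r' \<bullet> (r' \<bullet> y) \<bullet> inv2 D r" using assms by simp
  also have "\<dots> = y \<bullet> inv2 D r" using assms(1-8) by simp
  finally show ?thesis .
qed

lemma slide_right:
  "x \<in> Cel D \<Longrightarrow> y \<in> Cel D \<Longrightarrow> trg D (dom2 D y) = src D (dom2 D x) \<Longrightarrow>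
   (x \<star> id2 (cod2 D y)) \<bullet> (id2 (dom2 D x) \<star> y) = x \<star> y"
  by (subst interchange[symmetric]) auto

lemma slide_left:
  "x \<in> Cel D \<Longrightarrow> y \<in> Cel D \<Longrightarrow> trg D (dom2 D y) = src D (dom2 D x) \<Longrightarrow>
   (id2 (cod2 D x) \<star> y) \<bullet> (x \<star> id2 (dom2 D y)) = x \<star> y"
  by (subst interchange[symmetric]) auto

lemma whisker_left_vcomp:
  "y \<in> Cel D \<Longrightarrow> y' \<in> Cel D \<Longrightarrow> cod2 D y = dom2 D y' \<Longrightarrow> g \<in> Mor D \<Longrightarrow>
   trg D (dom2 D y) = src D g \<Longrightarrow> (id2 g \<star> y') \<bullet> (id2 g \<star> y) = id2 g \<star> (y' \<bullet> y)"
  by (subst interchange[symmetric]) auto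

lemma whisker_right_vcomp:
  "y \<in> Cel D \<Longrightarrow> y' \<in> Cel D \<Longrightarrow> cod2 D y = dom2 D y' \<Longrightarrow> f \<in> Mor D \<Longrightarrow>
   src D (dom2 D y) = trg D f \<Longrightarrow> (y' \<star> id2 f) \<bullet> (y \<star> id2 f) = (y' \<bullet> y) \<star> id2 f"
  by (subst interchange[symmetric]) auto

lemma whisker_right_vcomp3:
  "x \<in> Cel D \<Longrightarrow> y \<in> Cel D \<Longrightarrow> z \<in> Cel D \<Longrightarrow> cod2 D z = dom2 D y \<Longrightarrow> cod2 D y = dom2 D x \<Longrightarrow>
   f \<in> Mor D \<Longrightarrow> src D (dom2 D z) = trg D f \<Longrightarrow>
   (x \<bullet> y \<bullet> z) \<star> id2 f = (x \<star> id2 f) \<bullet> (y \<star> id2 f) \<bullet> (z \<star> id2 f)"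
  using whisker_right_vcomp[of z y f] whisker_right_vcomp[of "y \<bullet> z" x f] by simp

lemma whisker_left_vcomp3:
  "x \<in> Cel D \<Longrightarrow> y \<in> Cel D \<Longrightarrow> z \<in> Cel D \<Longrightarrow> cod2 D z = dom2 D y \<Longrightarrow> cod2 D y = dom2 D x \<Longrightarrow>
   g \<in> Mor D \<Longrightarrow> trg D (dom2 D z) = src D g \<Longrightarrow>
   id2 g \<star> (x \<bullet> y \<bullet> z) = (id2 g \<star> x) \<bullet> (id2 g \<star> y) \<bullet> (id2 g \<star> z)"
  using whisker_left_vcomp[of z y g] whisker_left_vcomp[of "y \<bullet> z" x g] by simp

text \<open>As \<open>\<bullet>\<close> associates to the right, \<open>b \<bullet> a \<bullet> t\<close> contains no subterm \<open>b \<bullet> a\<close>; these two lemmas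
  let an equation for \<open>b \<bullet> a\<close> (or \<open>b \<bullet> a \<bullet> z\<close>) rewrite a longer composite.\<close>

lemma vcomp_prefix2:
  "b \<bullet> a = c \<Longrightarrow> a \<in> Cel D \<Longrightarrow> b \<in> Cel D \<Longrightarrow> cod2 D a = dom2 D b \<Longrightarrow>
   t \<in> Cel D \<Longrightarrow> cod2 D t = dom2 D a \<Longrightarrow> b \<bullet> a \<bullet> t = c \<bullet> t"
  by (subst vcomp_assoc[symmetric]) auto

lemma vcomp_prefix3:
  assumes "b \<bullet> a \<bullet> z = c" "a \<in> Cel D" "b \<in> Cel D" "z \<in> Cel D"
    and "cod2 D a = dom2 D b" "cod2 D z = dom2 D a" "t \<in> Cel D" "cod2 D t = dom2 D z"
  shows "b \<bullet> a \<bullet> z \<bullet> t = c \<bullet> t"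
  using assms vcomp_assoc[of t z a] vcomp_assoc[of t "a \<bullet> z" b] by auto

end

locale pseudofunctor_on = C: two_category C + D: two_category D
  for C :: "('o,'m,'c,'x) tcat_scheme" and D :: "('p,'n,'d,'y) tcat_scheme" +
  fixes A :: "'m set" and F :: "('o,'m,'c,'p,'n,'d) psf"
  assumes arrowy: "arrowy_sub C A" and pseudofunctor: "pseudofunctor C A D F"
begin

lemma arrowy_Mor [simp]: "f \<in> A \<Longrightarrow> f \<in> Mor C"
  and arrowy_idm [simp]: "X \<in> Obj C \<Longrightarrow> idm C X \<in> A"
  and arrowy_cmp [simp]: "f \<in> A \<Longrightarrow> g \<in> A \<Longrightarrow> trg C f = src C g \<Longrightarrow> cmp C g f \<in> A"
  using arrowy unfolding arrowy_sub_def by auto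

lemma P0_in_Obj [simp]: "X \<in> Obj C \<Longrightarrow> P0 F X \<in> Obj D"
  using pseudofunctor unfolding pseudofunctor_def by (elim conjE) blast

lemma P1_props [simp]:
  "f \<in> A \<Longrightarrow> P1 F f \<in> Mor D \<and> src D (P1 F f) = P0 F (src C f) \<and> trg D (P1 F f) = P0 F (trg C f)"
  using pseudofunctor unfolding pseudofunctor_def by (elim conjE) blast

lemma P2_props [simp]:
  "a \<in> Cel C \<Longrightarrow> dom2 C a \<in> A \<Longrightarrow> cod2 C a \<in> A \<Longrightarrow>
   P2 F a \<in> Cel D \<and> dom2 D (P2 F a) = P1 F (dom2 C a) \<and> cod2 D (P2 F a) = P1 F (cod2 C a)"
  using pseudofunctor unfolding pseudofunctor_def cells_in_def by (elim conjE) blast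

lemma P2_idc [simp]: "f \<in> A \<Longrightarrow> P2 F (idc C f) = D.id2 (P1 F f)"
  using pseudofunctor unfolding pseudofunctor_def by (elim conjE) blast

lemma Pc_props [simp]:
  "f \<in> A \<Longrightarrow> g \<in> A \<Longrightarrow> trg C f = src C g \<Longrightarrow>
   iso2 D (Pc F g f) \<and> dom2 D (Pc F g f) = P1 F g \<diamond> P1 F f \<and> cod2 D (Pc F g f) = P1 F (cmp C g f)"
  using pseudofunctor unfolding pseudofunctor_def by (elim conjE) blast

lemma Pu_props [simp]:
  "X \<in> Obj C \<Longrightarrow>
   iso2 D (Pu F X) \<and> dom2 D (Pu F X) = idm D (P0 F X) \<and> cod2 D (Pu F X) = P1 F (idm C X)"
  using pseudofunctor unfolding pseudofunctor_def by (elim conjE) blast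

lemma Pc_unit_left:
  "f \<in> A \<Longrightarrow> Pc F (idm C (trg C f)) f \<bullet> (Pu F (trg C f) \<star> D.id2 (P1 F f)) = D.id2 (P1 F f)"
  using pseudofunctor unfolding pseudofunctor_def by (elim conjE) blast

lemma Pc_unit_right:
  "f \<in> A \<Longrightarrow> Pc F f (idm C (src C f)) \<bullet> (D.id2 (P1 F f) \<star> Pu F (src C f)) = D.id2 (P1 F f)"
  using pseudofunctor unfolding pseudofunctor_def by (elim conjE) blast

lemma P2_vcmp:
  "\<lbrakk>a \<in> cells_in C A; b \<in> cells_in C A; cod2 C a = dom2 C b\<rbrakk> \<Longrightarrow>
   P2 F (vcmp C b a) = P2 F b \<bullet> P2 F a"
  using pseudofunctor unfolding pseudofunctor_def by (elim conjE) blast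

lemma Pc_natural:
  "\<lbrakk>a \<in> cells_in C A; b \<in> cells_in C A; trg C (dom2 C a) = src C (dom2 C b)\<rbrakk> \<Longrightarrow>
   Pc F (cod2 C b) (cod2 C a) \<bullet> (P2 F b \<star> P2 F a) = P2 F (hcmp C b a) \<bullet> Pc F (dom2 C b) (dom2 C a)"
  using pseudofunctor unfolding pseudofunctor_def by (elim conjE) blast

lemma Pc_assoc:
  "\<lbrakk>f \<in> A; g \<in> A; h \<in> A; trg C f = src C g; trg C g = src C h\<rbrakk> \<Longrightarrow>
   Pc F h (cmp C g f) \<bullet> (D.id2 (P1 F h) \<star> Pc F g f) = Pc F (cmp C h g) f \<bullet> (Pc F h g \<star> D.id2 (P1 F f))"
  using pseudofunctor unfolding pseudofunctor_def by (elim conjE) blast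

lemma pseudofunctor_restrict:
  assumes "A' \<subseteq> A"
  shows "pseudofunctor C A' D F"
proof -
  have [simp]: "f \<in> A' \<Longrightarrow> f \<in> A" for f
    using assms by blast
  show ?thesis
    unfolding pseudofunctor_def
    by (intro conjI ballI impI)
      (auto simp: P2_vcmp Pc_natural Pc_assoc Pc_unit_left Pc_unit_right cells_in_def)
qed

end

locale GD_object = C: two_category C + D: two_category D
  for C :: "('o,'m,'c,'x) tcat_scheme" and D :: "('p,'n,'d,'y) tcat_scheme" +
  fixes A B :: "'m set" and FA FB :: "('o,'m,'c,'p,'n,'d) psf"
    and G :: "'m \<Rightarrow> 'm \<Rightarrow> 'm \<Rightarrow> 'm \<Rightarrow> 'c \<Rightarrow> 'd"
  assumes arrowy_A: "arrowy_sub C A" and arrowy_B: "arrowy_sub C B"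
    and GD: "GD_obj C A B D FA FB G"
begin

sublocale FA: pseudofunctor_on C D A FA
  using arrowy_A GD unfolding pseudofunctor_on_def pseudofunctor_on_axioms_def GD_obj_def
  by (simp add: C.two_category_axioms D.two_category_axioms)

sublocale FB: pseudofunctor_on C D B FB
  using arrowy_B GD unfolding pseudofunctor_on_def pseudofunctor_on_axioms_def GD_obj_def
  by (simp add: C.two_category_axioms D.two_category_axioms)

lemma P0_FB [simp]: "X \<in> Obj C \<Longrightarrow> P0 FB X = P0 FA X"
  using GD unfolding GD_obj_def by (elim conjE) simp

lemma ab_squareD:
  "ab_square C A B b a q p al \<Longrightarrow> b \<in> A \<and> a \<in> A \<and> q \<in> B \<and> p \<in> B \<and>
     src C q = src C b \<and> src C p = trg C b \<and> src C a = trg C q \<and> trg C p = trg C a \<and>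
     al \<in> Cel C \<and> dom2 C al = cmp C a q \<and> cod2 C al = cmp C p b"
  unfolding ab_square_def by auto

lemma G_props [simp]:
  "ab_square C A B b a q p al \<Longrightarrow>
   iso2 D (G b a q p al) \<and> dom2 D (G b a q p al) = P1 FA a \<diamond> P1 FB q \<and>
   cod2 D (G b a q p al) = P1 FB p \<diamond> P1 FA b"
  using GD unfolding GD_obj_def by (elim conjE) blast

lemma G_trivial_B_edges:
  "ab_square C A B b a (idm C (src C b)) (idm C (trg C b)) al \<Longrightarrow>
   (inv2 D (Pu FB (trg C b)) \<star> D.id2 (P1 FA b)) \<bullet> G b a (idm C (src C b)) (idm C (trg C b)) al
     \<bullet> (D.id2 (P1 FA a) \<star> Pu FB (src C b)) = P2 FA al"
  using GD unfolding GD_obj_def by (elim conjE) blast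

lemma G_trivial_A_edges:
  "ab_square C A B (idm C (src C q)) (idm C (trg C q)) q p al \<Longrightarrow>
   (D.id2 (P1 FB p) \<star> inv2 D (Pu FA (src C q))) \<bullet> G (idm C (src C q)) (idm C (trg C q)) q p al
     \<bullet> (Pu FA (trg C q) \<star> D.id2 (P1 FB q)) = P2 FB al"
  using GD unfolding GD_obj_def by (elim conjE) blast

lemma G_paste_vertical:
  "ab_square C A B c1 c2 q p al \<Longrightarrow> ab_square C A B c2 c3 q' p' al' \<Longrightarrow>
   (Pc FB p' p \<star> D.id2 (P1 FA c1)) \<bullet> (D.id2 (P1 FB p') \<star> G c1 c2 q p al)
     \<bullet> (G c2 c3 q' p' al' \<star> D.id2 (P1 FB q))
   = G c1 c3 (cmp C q' q) (cmp C p' p) (vcmp C (hcmp C (idc C p') al) (hcmp C al' (idc C q)))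
     \<bullet> (D.id2 (P1 FA c3) \<star> Pc FB q' q)"
  using GD unfolding GD_obj_def by (elim conjE) fast

lemma G_paste_horizontal:
  "ab_square C A B b a p1 p2 al \<Longrightarrow> ab_square C A B b' a' p2 p3 al' \<Longrightarrow>
   (D.id2 (P1 FB p3) \<star> Pc FA b' b) \<bullet> (G b' a' p2 p3 al' \<star> D.id2 (P1 FA b))
     \<bullet> (D.id2 (P1 FA a') \<star> G b a p1 p2 al)
   = G (cmp C b' b) (cmp C a' a) p1 p3 (vcmp C (hcmp C al' (idc C b)) (hcmp C (idc C a') al))
     \<bullet> (Pc FA a' a \<star> D.id2 (P1 FB p1))"
  using GD unfolding GD_obj_def by (elim conjE) fast

abbreviation \<rho> where "\<rho> \<equiv> rho C D FA FB G"

lemma ab_square_rho: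
  "f \<in> A \<Longrightarrow> f \<in> B \<Longrightarrow> ab_square C A B f (idm C (trg C f)) f (idm C (trg C f)) (idc C f)"
  unfolding ab_square_def by simp

lemma rho_props [simp]:
  "f \<in> A \<Longrightarrow> f \<in> B \<Longrightarrow> iso2 D (\<rho> f) \<and> dom2 D (\<rho> f) = P1 FB f \<and> cod2 D (\<rho> f) = P1 FA f"
  unfolding rho_def using ab_square_rho by simp

lemma G_trivial_B_edges_right:
  assumes sq: "ab_square C A B b a (idm C (src C b)) (idm C (trg C b)) al"
  shows "G b a (idm C (src C b)) (idm C (trg C b)) al \<bullet> (D.id2 (P1 FA a) \<star> Pu FB (src C b))
    = (Pu FB (trg C b) \<star> D.id2 (P1 FA b)) \<bullet> P2 FA al"
proof -
  have [simp]: "a \<in> A" "b \<in> A" "src C a = src C b" "trg C a = trg C b" "al \<in> Cel C"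
    "dom2 C al = a" "cod2 C al = b"
    using ab_squareD[OF sq] by auto
  let ?v = "Pu FB (trg C b)" and ?G = "G b a (idm C (src C b)) (idm C (trg C b)) al"
  have v: "(?v \<star> D.id2 (P1 FA b)) \<bullet> (inv2 D ?v \<star> D.id2 (P1 FA b))
      = D.id2 (P1 FB (idm C (trg C b)) \<diamond> P1 FA b)"
    using D.whisker_right_vcomp[of "inv2 D ?v" ?v "P1 FA b"] by simp
  have "?G \<bullet> (D.id2 (P1 FA a) \<star> Pu FB (src C b))
      = (?v \<star> D.id2 (P1 FA b)) \<bullet> (inv2 D ?v \<star> D.id2 (P1 FA b)) \<bullet> ?G \<bullet> (D.id2 (P1 FA a) \<star> Pu FB (src C b))"
    using sq by (simp add: D.vcomp_prefix2[OF v])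
  also have "\<dots> = (?v \<star> D.id2 (P1 FA b)) \<bullet> P2 FA al"
    using sq by (simp add: G_trivial_B_edges)
  finally show ?thesis .
qed

lemma G_trivial_B_edges_left:
  assumes sq: "ab_square C A B b a (idm C (src C b)) (idm C (trg C b)) al"
  shows "(inv2 D (Pu FB (trg C b)) \<star> D.id2 (P1 FA b)) \<bullet> G b a (idm C (src C b)) (idm C (trg C b)) al
    = P2 FA al \<bullet> (D.id2 (P1 FA a) \<star> inv2 D (Pu FB (src C b)))"
proof -
  have [simp]: "a \<in> A" "b \<in> A" "src C a = src C b" "trg C a = trg C b" "al \<in> Cel C"
    "dom2 C al = a" "cod2 C al = b"
    using ab_squareD[OF sq] by auto
  let ?u = "Pu FB (src C b)" and ?G = "G b a (idm C (src C b)) (idm C (trg C b)) al"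
  have u: "(D.id2 (P1 FA a) \<star> ?u) \<bullet> (D.id2 (P1 FA a) \<star> inv2 D ?u)
      = D.id2 (P1 FA a \<diamond> P1 FB (idm C (src C b)))"
    using D.whisker_left_vcomp[of "inv2 D ?u" ?u "P1 FA a"] by simp
  have "(inv2 D (Pu FB (trg C b)) \<star> D.id2 (P1 FA b)) \<bullet> ?G
      = (inv2 D (Pu FB (trg C b)) \<star> D.id2 (P1 FA b)) \<bullet> ?G \<bullet> (D.id2 (P1 FA a) \<star> ?u)
        \<bullet> (D.id2 (P1 FA a) \<star> inv2 D ?u)"
    using sq by (simp add: u)
  also have "\<dots> = P2 FA al \<bullet> (D.id2 (P1 FA a) \<star> inv2 D ?u)"
    using sq by (simp add: D.vcomp_prefix3[OF G_trivial_B_edges[OF sq]])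
  finally show ?thesis .
qed

lemma G_trivial_A_edges_right:
  assumes sq: "ab_square C A B (idm C (src C q)) (idm C (trg C q)) q p al"
  shows "G (idm C (src C q)) (idm C (trg C q)) q p al \<bullet> (Pu FA (trg C q) \<star> D.id2 (P1 FB q))
    = (D.id2 (P1 FB p) \<star> Pu FA (src C q)) \<bullet> P2 FB al"
proof -
  have [simp]: "p \<in> B" "q \<in> B" "src C p = src C q" "trg C p = trg C q" "al \<in> Cel C"
    "dom2 C al = q" "cod2 C al = p"
    using ab_squareD[OF sq] by auto
  let ?u = "Pu FA (src C q)" and ?G = "G (idm C (src C q)) (idm C (trg C q)) q p al"
  have u: "(D.id2 (P1 FB p) \<star> ?u) \<bullet> (D.id2 (P1 FB p) \<star> inv2 D ?u)
      = D.id2 (P1 FB p \<diamond> P1 FA (idm C (src C q)))"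
    using D.whisker_left_vcomp[of "inv2 D ?u" ?u "P1 FB p"] by simp
  have "?G \<bullet> (Pu FA (trg C q) \<star> D.id2 (P1 FB q))
      = (D.id2 (P1 FB p) \<star> ?u) \<bullet> (D.id2 (P1 FB p) \<star> inv2 D ?u) \<bullet> ?G \<bullet> (Pu FA (trg C q) \<star> D.id2 (P1 FB q))"
    using sq by (simp add: D.vcomp_prefix2[OF u])
  also have "\<dots> = (D.id2 (P1 FB p) \<star> ?u) \<bullet> P2 FB al"
    using sq by (simp add: G_trivial_A_edges)
  finally show ?thesis .
qed

text \<open>A square whose \<open>\<B>\<close>-edge \<open>p\<close> is an identity is a triangle \<open>a q \<Rightarrow> b\<close>; stripping the unit
  constraint of \<open>F\<^sub>\<B>\<close> off its \<open>G\<close>-cell gives a 2-cell \<open>F\<^sub>\<A>(a) F\<^sub>\<B>(q) \<Rightarrow> F\<^sub>\<A>(b)\<close>.\<close>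

definition G_triangle :: "'m \<Rightarrow> 'm \<Rightarrow> 'm \<Rightarrow> 'c \<Rightarrow> 'd" where
  "G_triangle b a q al = (inv2 D (Pu FB (trg C a)) \<star> D.id2 (P1 FA b)) \<bullet> G b a q (idm C (trg C a)) al"

lemma G_eq_G_triangle:
  assumes sq: "ab_square C A B b a q (idm C (trg C a)) al"
  shows "G b a q (idm C (trg C a)) al = (Pu FB (trg C a) \<star> D.id2 (P1 FA b)) \<bullet> G_triangle b a q al"
proof -
  have [simp]: "a \<in> A" "b \<in> A" "trg C b = trg C a"
    using ab_squareD[OF sq] by auto
  let ?v = "Pu FB (trg C a)"
  have "(?v \<star> D.id2 (P1 FA b)) \<bullet> (inv2 D ?v \<star> D.id2 (P1 FA b)) = D.id2 (P1 FB (idm C (trg C a)) \<diamond> P1 FA b)"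
    using D.whisker_right_vcomp[of "inv2 D ?v" ?v "P1 FA b"] by simp
  then show ?thesis
    unfolding G_triangle_def using sq by (simp add: D.vcomp_prefix2)
qed

lemma G_identity_right_factor:
  assumes sq: "ab_square C A B c a q (idm C (trg C a)) al" and qA: "q \<in> A"
  shows "G c a q (idm C (trg C a)) al
    = (D.id2 (P1 FB (idm C (trg C a))) \<star> P2 FA al) \<bullet> G (cmp C a q) a q (idm C (trg C a)) (idc C (cmp C a q))"
proof -
  have [simp]: "c \<in> A" "a \<in> A" "q \<in> B" "q \<in> A" "src C q = src C c" "trg C c = trg C a"
    "src C a = trg C q" "al \<in> Cel C" "dom2 C al = cmp C a q" "cod2 C al = c"
    using ab_squareD[OF sq] qA by auto
  let ?W = "trg C a" and ?X = "src C c"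
  let ?GS = "G c a q (idm C ?W) al"
  let ?GS1 = "G c (cmp C a q) (idm C ?X) (idm C ?W) al"
  let ?GS2 = "G (cmp C a q) a q (idm C ?W) (idc C (cmp C a q))"
  let ?vW = "Pu FB ?W" and ?vX = "Pu FB ?X" and ?al = "P2 FA al"
  have sqS1: "ab_square C A B c (cmp C a q) (idm C (src C c)) (idm C (trg C c)) al"
    unfolding ab_square_def by simp
  have sqS2: "ab_square C A B (cmp C a q) a q (idm C ?W) (idc C (cmp C a q))"
    unfolding ab_square_def by simp
  have paste: "(Pc FB (idm C ?W) (idm C ?W) \<star> D.id2 (P1 FA c)) \<bullet> (D.id2 (P1 FB (idm C ?W)) \<star> ?GS1)
     \<bullet> (?GS2 \<star> D.id2 (P1 FB (idm C ?X))) = ?GS \<bullet> (D.id2 (P1 FA a) \<star> Pc FB q (idm C ?X))"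
    using G_paste_vertical[OF sqS1 sqS2] by simp
  have S1: "?GS1 \<bullet> (D.id2 (P1 FA (cmp C a q)) \<star> ?vX) = (?vW \<star> D.id2 (P1 FA c)) \<bullet> ?al"
    using G_trivial_B_edges_right[OF sqS1] by simp
  have unit_q: "(D.id2 (P1 FA a) \<star> Pc FB q (idm C ?X)) \<bullet> (D.id2 (P1 FA a) \<star> D.id2 (P1 FB q) \<star> ?vX)
      = D.id2 (P1 FA a \<diamond> P1 FB q)"
    using D.whisker_left_vcomp[of "D.id2 (P1 FB q) \<star> ?vX" "Pc FB q (idm C ?X)" "P1 FA a"] FB.Pc_unit_right[of q] by simp
  have slide_G: "(?GS2 \<star> D.id2 (P1 FB (idm C ?X))) \<bullet> (D.id2 (P1 FA a) \<star> D.id2 (P1 FB q) \<star> ?vX) =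
     (D.id2 (P1 FB (idm C ?W)) \<star> D.id2 (P1 FA (cmp C a q)) \<star> ?vX) \<bullet> ?GS2"
    using D.slide_right[of ?GS2 ?vX] D.slide_left[of ?GS2 ?vX] sqS2 by simp
  have whisker_G: "(D.id2 (P1 FB (idm C ?W)) \<star> ?GS1)
      \<bullet> (D.id2 (P1 FB (idm C ?W)) \<star> D.id2 (P1 FA (cmp C a q)) \<star> ?vX)
     = D.id2 (P1 FB (idm C ?W)) \<star> (?GS1 \<bullet> (D.id2 (P1 FA (cmp C a q)) \<star> ?vX))"
    using D.whisker_left_vcomp[of "D.id2 (P1 FA (cmp C a q)) \<star> ?vX" ?GS1 "P1 FB (idm C ?W)"] sqS1 by simp
  have unit_W: "(Pc FB (idm C ?W) (idm C ?W) \<star> D.id2 (P1 FA c))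
      \<bullet> (D.id2 (P1 FB (idm C ?W)) \<star> ?vW \<star> D.id2 (P1 FA c))
     = D.id2 (P1 FB (idm C ?W) \<diamond> P1 FA c)"
    using D.whisker_right_vcomp[of "D.id2 (P1 FB (idm C ?W)) \<star> ?vW" "Pc FB (idm C ?W) (idm C ?W)" "P1 FA c"]
      FB.Pc_unit_right[of "idm C ?W"] by simp
  have whisker_al: "D.id2 (P1 FB (idm C ?W)) \<star> ((?vW \<star> D.id2 (P1 FA c)) \<bullet> ?al) =
     (D.id2 (P1 FB (idm C ?W)) \<star> ?vW \<star> D.id2 (P1 FA c)) \<bullet> (D.id2 (P1 FB (idm C ?W)) \<star> ?al)"
    using D.whisker_left_vcomp[of ?al "?vW \<star> D.id2 (P1 FA c)" "P1 FB (idm C ?W)"] by simp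
  have "?GS = ?GS \<bullet> (D.id2 (P1 FA a) \<star> Pc FB q (idm C ?X)) \<bullet> (D.id2 (P1 FA a) \<star> D.id2 (P1 FB q) \<star> ?vX)"
    using sq by (simp add: unit_q)
  also have "\<dots> = (Pc FB (idm C ?W) (idm C ?W) \<star> D.id2 (P1 FA c)) \<bullet> (D.id2 (P1 FB (idm C ?W)) \<star> ?GS1)
    \<bullet> (D.id2 (P1 FB (idm C ?W)) \<star> D.id2 (P1 FA (cmp C a q)) \<star> ?vX) \<bullet> ?GS2"
    using sq sqS1 sqS2 by (simp add: D.vcomp_prefix2[OF paste[symmetric]] slide_G)
  also have "\<dots> = (Pc FB (idm C ?W) (idm C ?W) \<star> D.id2 (P1 FA c))
    \<bullet> (D.id2 (P1 FB (idm C ?W)) \<star> ((?vW \<star> D.id2 (P1 FA c)) \<bullet> ?al)) \<bullet> ?GS2"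
    using sq sqS1 sqS2 by (simp add: D.vcomp_prefix2[OF whisker_G] S1)
  also have "\<dots> = (D.id2 (P1 FB (idm C ?W)) \<star> ?al) \<bullet> ?GS2"
    using sq sqS1 sqS2 by (simp only: whisker_al) (simp add: D.vcomp_prefix2[OF unit_W])
  finally show ?thesis .
qed

lemma G_triangle_factor:
  assumes sq: "ab_square C A B c a q (idm C (trg C a)) al" and qA: "q \<in> A"
  shows "G_triangle c a q al = P2 FA al \<bullet> G_triangle (cmp C a q) a q (idc C (cmp C a q))"
proof -
  have [simp]: "c \<in> A" "a \<in> A" "q \<in> A" "q \<in> B" "src C a = trg C q" "trg C c = trg C a"
    "al \<in> Cel C" "dom2 C al = cmp C a q" "cod2 C al = c"
    using ab_squareD[OF sq] qA by auto
  have sq': "ab_square C A B (cmp C a q) a q (idm C (trg C a)) (idc C (cmp C a q))"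
    unfolding ab_square_def by simp
  let ?vW = "Pu FB (trg C a)"
  have slide: "(inv2 D ?vW \<star> D.id2 (P1 FA c)) \<bullet> (D.id2 (P1 FB (idm C (trg C a))) \<star> P2 FA al)
      = P2 FA al \<bullet> (inv2 D ?vW \<star> D.id2 (P1 FA (cmp C a q)))"
    using D.slide_right[of "inv2 D ?vW" "P2 FA al"] D.slide_left[of "inv2 D ?vW" "P2 FA al"] by simp
  show ?thesis
    unfolding G_triangle_def G_identity_right_factor[OF sq qA] using sq'
    by (simp add: D.vcomp_prefix2[OF slide])
qed

lemma G_triangle_comp:
  assumes "a \<in> A" "q \<in> A" "q \<in> B" "src C a = trg C q"
  shows "G_triangle (cmp C a q) a q (idc C (cmp C a q)) = Pc FA a q \<bullet> (D.id2 (P1 FA a) \<star> \<rho> q)"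
proof -
  have [simp]: "a \<in> A" "q \<in> A" "q \<in> B" "src C a = trg C q"
    using assms by auto
  let ?W = "trg C a" and ?Z = "trg C q"
  let ?u = "Pu FA ?Z" and ?vW = "Pu FB ?W" and ?vZ = "Pu FB ?Z"
  let ?GS = "G (cmp C a q) a q (idm C ?W) (idc C (cmp C a q))"
  let ?GD = "G a a (idm C ?Z) (idm C ?W) (idc C a)"
  let ?GE = "G q (idm C ?Z) q (idm C ?Z) (idc C q)"
  have sqS: "ab_square C A B (cmp C a q) a q (idm C ?W) (idc C (cmp C a q))"
    unfolding ab_square_def by simp
  have sqD: "ab_square C A B a a (idm C ?Z) (idm C ?W) (idc C a)"
    unfolding ab_square_def by simp
  have sqE: "ab_square C A B q (idm C ?Z) q (idm C ?Z) (idc C q)"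
    using ab_square_rho[of q] by simp
  have paste: "(D.id2 (P1 FB (idm C ?W)) \<star> Pc FA a q) \<bullet> (?GD \<star> D.id2 (P1 FA q)) \<bullet> (D.id2 (P1 FA a) \<star> ?GE)
     = ?GS \<bullet> (Pc FA a (idm C ?Z) \<star> D.id2 (P1 FB q))"
    using G_paste_horizontal[OF sqE sqD] by simp
  have GD: "(inv2 D ?vW \<star> D.id2 (P1 FA a)) \<bullet> ?GD = D.id2 (P1 FA a) \<star> inv2 D ?vZ"
    using G_trivial_B_edges_left[of a a "idc C a"] sqD by simp
  have slide_Pc: "(inv2 D ?vW \<star> D.id2 (P1 FA (cmp C a q))) \<bullet> (D.id2 (P1 FB (idm C ?W)) \<star> Pc FA a q) =
     Pc FA a q \<bullet> (inv2 D ?vW \<star> D.id2 (P1 FA a \<diamond> P1 FA q))"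
    using D.slide_right[of "inv2 D ?vW" "Pc FA a q"] D.slide_left[of "inv2 D ?vW" "Pc FA a q"] by simp
  have GD_whiskered: "(inv2 D ?vW \<star> D.id2 (P1 FA a \<diamond> P1 FA q)) \<bullet> (?GD \<star> D.id2 (P1 FA q))
      = D.id2 (P1 FA a) \<star> inv2 D ?vZ \<star> D.id2 (P1 FA q)"
    using D.whisker_right_vcomp[of ?GD "inv2 D ?vW \<star> D.id2 (P1 FA a)" "P1 FA q"] GD sqD by simp
  have rho_whiskered: "(D.id2 (P1 FA a) \<star> inv2 D ?vZ \<star> D.id2 (P1 FA q)) \<bullet> (D.id2 (P1 FA a) \<star> ?GE)
      \<bullet> (D.id2 (P1 FA a) \<star> ?u \<star> D.id2 (P1 FB q)) = D.id2 (P1 FA a) \<star> \<rho> q"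
    unfolding rho_def using sqE by (subst D.whisker_left_vcomp3) auto
  have unit_a: "(Pc FA a (idm C ?Z) \<star> D.id2 (P1 FB q)) \<bullet> (D.id2 (P1 FA a) \<star> ?u \<star> D.id2 (P1 FB q))
      = D.id2 (P1 FA a \<diamond> P1 FB q)"
    using D.whisker_right_vcomp[of "D.id2 (P1 FA a) \<star> ?u" "Pc FA a (idm C ?Z)" "P1 FB q"]
      FA.Pc_unit_right[of a] by simp
  have "G_triangle (cmp C a q) a q (idc C (cmp C a q)) = (inv2 D ?vW \<star> D.id2 (P1 FA (cmp C a q))) \<bullet> ?GS
      \<bullet> (Pc FA a (idm C ?Z) \<star> D.id2 (P1 FB q)) \<bullet> (D.id2 (P1 FA a) \<star> ?u \<star> D.id2 (P1 FB q))"
    unfolding G_triangle_def using sqS by (simp add: unit_a)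
  also have "\<dots> = Pc FA a q \<bullet> (inv2 D ?vW \<star> D.id2 (P1 FA a \<diamond> P1 FA q)) \<bullet> (?GD \<star> D.id2 (P1 FA q))
      \<bullet> (D.id2 (P1 FA a) \<star> ?GE) \<bullet> (D.id2 (P1 FA a) \<star> ?u \<star> D.id2 (P1 FB q))"
    using sqS sqE sqD by (simp add: D.vcomp_prefix2[OF paste[symmetric]] D.vcomp_prefix2[OF slide_Pc])
  also have "\<dots> = Pc FA a q \<bullet> (D.id2 (P1 FA a) \<star> \<rho> q)"
    using sqS sqE sqD by (simp add: D.vcomp_prefix2[OF GD_whiskered] rho_whiskered)
  finally show ?thesis .
qed

lemma G_triangle_paste_rho:
  assumes sq: "ab_square C A B b a q p al" and pA: "p \<in> A"
  shows "Pc FA p b \<bullet> (\<rho> p \<star> D.id2 (P1 FA b)) \<bullet> G b a q p al = G_triangle (cmp C p b) a q al"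
proof -
  have [simp]: "src C q = src C b" "src C p = trg C b" "src C a = trg C q" "trg C p = trg C a"
    "b \<in> A" "a \<in> A" "q \<in> B" "p \<in> B" "p \<in> A" "al \<in> Cel C" "dom2 C al = cmp C a q" "cod2 C al = cmp C p b"
    using ab_squareD[OF sq] pA by auto
  let ?W = "trg C a"
  let ?u = "Pu FA ?W" and ?v = "Pu FB ?W"
  let ?GD = "G b a q p al"
  let ?GE = "G p (idm C ?W) p (idm C ?W) (idc C p)"
  let ?GS = "G (cmp C p b) a q (idm C ?W) al"
  have sqE: "ab_square C A B p (idm C ?W) p (idm C ?W) (idc C p)"
    using ab_square_rho[of p] by simp
  have sqS: "ab_square C A B (cmp C p b) a q (idm C ?W) al"
    unfolding ab_square_def by simp
  have paste: "(D.id2 (P1 FB (idm C ?W)) \<star> Pc FA p b) \<bullet> (?GE \<star> D.id2 (P1 FA b))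
      \<bullet> (D.id2 (P1 FA (idm C ?W)) \<star> ?GD)
      = ?GS \<bullet> (Pc FA (idm C ?W) a \<star> D.id2 (P1 FB q))"
    using G_paste_horizontal[OF sq sqE] by simp
  have rho_whiskered: "\<rho> p \<star> D.id2 (P1 FA b) = (inv2 D ?v \<star> D.id2 (P1 FA p \<diamond> P1 FA b))
      \<bullet> (?GE \<star> D.id2 (P1 FA b))
      \<bullet> (?u \<star> D.id2 (P1 FB p \<diamond> P1 FA b))"
    unfolding rho_def using sqE by (subst D.whisker_right_vcomp3) auto
  have slide_G: "(?u \<star> D.id2 (P1 FB p \<diamond> P1 FA b)) \<bullet> ?GD = (D.id2 (P1 FA (idm C ?W)) \<star> ?GD)
      \<bullet> (?u \<star> D.id2 (P1 FA a \<diamond> P1 FB q))"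
    using D.slide_right[of ?u ?GD] D.slide_left[of ?u ?GD] sq by simp
  have slide_Pc: "Pc FA p b \<bullet> (inv2 D ?v \<star> D.id2 (P1 FA p \<diamond> P1 FA b)) =
      (inv2 D ?v \<star> D.id2 (P1 FA (cmp C p b))) \<bullet> (D.id2 (P1 FB (idm C ?W)) \<star> Pc FA p b)"
    using D.slide_right[of "inv2 D ?v" "Pc FA p b"] D.slide_left[of "inv2 D ?v" "Pc FA p b"] by simp
  have unit_a: "(Pc FA (idm C ?W) a \<star> D.id2 (P1 FB q)) \<bullet> (?u \<star> D.id2 (P1 FA a \<diamond> P1 FB q))
      = D.id2 (P1 FA a \<diamond> P1 FB q)"
    using D.whisker_right_vcomp[of "?u \<star> D.id2 (P1 FA a)" "Pc FA (idm C ?W) a" "P1 FB q"] FA.Pc_unit_left[of a]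
    by simp
  have "Pc FA p b \<bullet> (\<rho> p \<star> D.id2 (P1 FA b)) \<bullet> ?GD
      = (inv2 D ?v \<star> D.id2 (P1 FA (cmp C p b))) \<bullet> (D.id2 (P1 FB (idm C ?W)) \<star> Pc FA p b)
        \<bullet> (?GE \<star> D.id2 (P1 FA b)) \<bullet> (D.id2 (P1 FA (idm C ?W)) \<star> ?GD) \<bullet> (?u \<star> D.id2 (P1 FA a \<diamond> P1 FB q))"
    using sqE sq by (simp add: rho_whiskered slide_G D.vcomp_prefix2[OF slide_Pc])
  also have "\<dots> = (inv2 D ?v \<star> D.id2 (P1 FA (cmp C p b))) \<bullet> ?GS"
    using sqE sq sqS by (simp add: D.vcomp_prefix3[OF paste] unit_a)
  finally show ?thesis
    unfolding G_triangle_def .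
qed

theorem rho_square_law:
  assumes sq: "ab_square C A B b a q p al" and "q \<in> A" "p \<in> A"
  shows "P2 FA al \<bullet> Pc FA a q \<bullet> (D.id2 (P1 FA a) \<star> \<rho> q)
    = Pc FA p b \<bullet> (\<rho> p \<star> D.id2 (P1 FA b)) \<bullet> G b a q p al"
proof -
  have [simp]: "a \<in> A" "q \<in> B" "src C a = trg C q" "trg C p = trg C a" "src C p = trg C b"
    "src C q = src C b"
    using ab_squareD[OF sq] by auto
  have sqS: "ab_square C A B (cmp C p b) a q (idm C (trg C a)) al"
    using sq assms unfolding ab_square_def by simp
  show ?thesis
    using G_triangle_factor[OF sqS] G_triangle_comp G_triangle_paste_rho[OF sq] assms by simp
qed

lemma rho_idm:
  assumes X: "X \<in> Obj C"
  shows "\<rho> (idm C X) = Pu FA X \<star> inv2 D (Pu FB X)"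
proof -
  have sq: "ab_square C A B (idm C X) (idm C X) (idm C X) (idm C X) (idc C (idm C X))"
    unfolding ab_square_def using X by simp
  have "\<rho> (idm C X) = (D.id2 (P1 FA (idm C X)) \<star> inv2 D (Pu FB X)) \<bullet> (Pu FA X \<star> D.id2 (P1 FB (idm C X)))"
    unfolding rho_def using X sq G_trivial_B_edges_left[of "idm C X" "idm C X" "idc C (idm C X)"]
    by (simp add: D.vcomp_prefix2)
  also have "\<dots> = Pu FA X \<star> inv2 D (Pu FB X)"
    using D.slide_left[of "Pu FA X" "inv2 D (Pu FB X)"] X by simp
  finally show ?thesis .
qed

lemma rho_idm_Pu: "X \<in> Obj C \<Longrightarrow> \<rho> (idm C X) \<bullet> Pu FB X = Pu FA X"
  using D.interchange[of "Pu FB X" "inv2 D (Pu FB X)" "D.id2 (idm D (P0 FA X))" "Pu FA X"]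
  by (simp add: rho_idm)

lemma G_transposed_rho_square:
  assumes "b \<in> A" "b \<in> B"
  shows "G (idm C (src C b)) b (idm C (src C b)) b (idc C b) \<bullet> (D.id2 (P1 FA b) \<star> Pu FB (src C b))
    = (inv2 D (\<rho> b) \<star> D.id2 (P1 FA (idm C (src C b)))) \<bullet> (D.id2 (P1 FA b) \<star> Pu FA (src C b))"
proof -
  have [simp]: "b \<in> A" "b \<in> B" using assms by auto
  let ?X = "src C b"
  let ?GT = "G (idm C ?X) b (idm C ?X) b (idc C b)"
  have sqT: "ab_square C A B (idm C ?X) b (idm C ?X) b (idc C b)"
    unfolding ab_square_def by simp
  have law: "D.id2 (P1 FA b) \<star> \<rho> (idm C ?X) = (\<rho> b \<star> D.id2 (P1 FA (idm C ?X))) \<bullet> ?GT"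
  proof (rule D.iso2_cancel_left[of "Pc FA b (idm C ?X)"])
    show "Pc FA b (idm C ?X) \<bullet> (D.id2 (P1 FA b) \<star> \<rho> (idm C ?X))
        = Pc FA b (idm C ?X) \<bullet> (\<rho> b \<star> D.id2 (P1 FA (idm C ?X))) \<bullet> ?GT"
      using rho_square_law[OF sqT] sqT by simp
  qed (use sqT in simp_all)
  have inv: "(inv2 D (\<rho> b) \<star> D.id2 (P1 FA (idm C ?X))) \<bullet> (\<rho> b \<star> D.id2 (P1 FA (idm C ?X)))
      = D.id2 (P1 FB b \<diamond> P1 FA (idm C ?X))"
    using D.whisker_right_vcomp[of "\<rho> b" "inv2 D (\<rho> b)" "P1 FA (idm C ?X)"] by simp
  have "?GT \<bullet> (D.id2 (P1 FA b) \<star> Pu FB ?X)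
      = (inv2 D (\<rho> b) \<star> D.id2 (P1 FA (idm C ?X))) \<bullet> (\<rho> b \<star> D.id2 (P1 FA (idm C ?X))) \<bullet> ?GT
        \<bullet> (D.id2 (P1 FA b) \<star> Pu FB ?X)"
    using sqT by (simp add: D.vcomp_prefix2[OF inv])
  also have "\<dots> = (inv2 D (\<rho> b) \<star> D.id2 (P1 FA (idm C ?X))) \<bullet> (D.id2 (P1 FA b) \<star> (\<rho> (idm C ?X) \<bullet> Pu FB ?X))"
    using sqT D.whisker_left_vcomp[of "Pu FB ?X" "\<rho> (idm C ?X)" "P1 FA b"]
    by (simp add: D.vcomp_prefix2[OF law[symmetric]])
  finally show ?thesis
    by (simp add: rho_idm_Pu)
qed

lemma G_top_identity_factor:
  assumes sq: "ab_square C A B b a q p al" and "b \<in> B"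
  shows "G (idm C (src C b)) a q (cmp C p b) al
    = ((Pc FB p b \<bullet> (D.id2 (P1 FB p) \<star> inv2 D (\<rho> b)) \<bullet> G b a q p al) \<star> D.id2 (P1 FA (idm C (src C b))))
      \<bullet> (D.id2 (P1 FA a) \<star> D.id2 (P1 FB q) \<star> Pu FA (src C b))"
proof -
  have [simp]: "src C q = src C b" "src C p = trg C b" "src C a = trg C q" "trg C p = trg C a"
    "b \<in> A" "a \<in> A" "q \<in> B" "p \<in> B" "b \<in> B" "al \<in> Cel C" "dom2 C al = cmp C a q" "cod2 C al = cmp C p b"
    using ab_squareD[OF sq] assms(2) by auto
  let ?X = "src C b"
  let ?uX = "Pu FA ?X" and ?vX = "Pu FB ?X"
  let ?GD = "G b a q p al"
  let ?GT = "G (idm C ?X) b (idm C ?X) b (idc C b)"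
  let ?GS = "G (idm C ?X) a q (cmp C p b) al"
  let ?R = "Pc FB p b \<bullet> (D.id2 (P1 FB p) \<star> inv2 D (\<rho> b)) \<bullet> ?GD"
  have sqT: "ab_square C A B (idm C ?X) b (idm C ?X) b (idc C b)"
    unfolding ab_square_def by simp
  have sqS: "ab_square C A B (idm C ?X) a q (cmp C p b) al"
    unfolding ab_square_def by simp
  have paste: "(Pc FB p b \<star> D.id2 (P1 FA (idm C ?X))) \<bullet> (D.id2 (P1 FB p) \<star> ?GT)
      \<bullet> (?GD \<star> D.id2 (P1 FB (idm C ?X)))
      = ?GS \<bullet> (D.id2 (P1 FA a) \<star> Pc FB q (idm C ?X))"
    using G_paste_vertical[OF sqT sq] by simp
  have unit_q: "?GS = ?GS \<bullet> (D.id2 (P1 FA a) \<star> Pc FB q (idm C ?X))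
      \<bullet> (D.id2 (P1 FA a) \<star> D.id2 (P1 FB q) \<star> ?vX)"
    using D.whisker_left_vcomp[of "D.id2 (P1 FB q) \<star> ?vX" "Pc FB q (idm C ?X)" "P1 FA a"]
      FB.Pc_unit_right[of q] sqS by simp
  have slide_vX: "(?GD \<star> D.id2 (P1 FB (idm C ?X))) \<bullet> (D.id2 (P1 FA a) \<star> D.id2 (P1 FB q) \<star> ?vX)
      = (D.id2 (P1 FB p) \<star> D.id2 (P1 FA b) \<star> ?vX) \<bullet> ?GD"
    using D.slide_right[of ?GD ?vX] D.slide_left[of ?GD ?vX] sq by simp
  have GT_whiskered: "(D.id2 (P1 FB p) \<star> ?GT) \<bullet> (D.id2 (P1 FB p) \<star> D.id2 (P1 FA b) \<star> ?vX)
      = (D.id2 (P1 FB p) \<star> inv2 D (\<rho> b) \<star> D.id2 (P1 FA (idm C ?X))) \<bullet> (D.id2 (P1 FB p) \<star> D.id2 (P1 FA b) \<star> ?uX)"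
    using D.whisker_left_vcomp[of "D.id2 (P1 FA b) \<star> ?vX" ?GT "P1 FB p"]
      D.whisker_left_vcomp[of "D.id2 (P1 FA b) \<star> ?uX" "inv2 D (\<rho> b) \<star> D.id2 (P1 FA (idm C ?X))" "P1 FB p"]
      G_transposed_rho_square[of b] sqT by simp
  have slide_uX: "(D.id2 (P1 FB p) \<star> D.id2 (P1 FA b) \<star> ?uX) \<bullet> ?GD
      = (?GD \<star> D.id2 (P1 FA (idm C ?X))) \<bullet> (D.id2 (P1 FA a) \<star> D.id2 (P1 FB q) \<star> ?uX)"
    using D.slide_right[of ?GD ?uX] D.slide_left[of ?GD ?uX] sq by simp
  have whisker_R: "(Pc FB p b \<star> D.id2 (P1 FA (idm C ?X)))
      \<bullet> (D.id2 (P1 FB p) \<star> inv2 D (\<rho> b) \<star> D.id2 (P1 FA (idm C ?X)))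
      \<bullet> (?GD \<star> D.id2 (P1 FA (idm C ?X))) = ?R \<star> D.id2 (P1 FA (idm C ?X))"
    using sq by (subst D.whisker_right_vcomp3) auto
  have "?GS = (Pc FB p b \<star> D.id2 (P1 FA (idm C ?X))) \<bullet> (D.id2 (P1 FB p) \<star> ?GT)
      \<bullet> (D.id2 (P1 FB p) \<star> D.id2 (P1 FA b) \<star> ?vX) \<bullet> ?GD"
    using sq sqT sqS by (subst unit_q) (simp add: D.vcomp_prefix2[OF paste[symmetric]] slide_vX)
  also have "\<dots> = (Pc FB p b \<star> D.id2 (P1 FA (idm C ?X)))
      \<bullet> (D.id2 (P1 FB p) \<star> inv2 D (\<rho> b) \<star> D.id2 (P1 FA (idm C ?X)))
      \<bullet> (?GD \<star> D.id2 (P1 FA (idm C ?X))) \<bullet> (D.id2 (P1 FA a) \<star> D.id2 (P1 FB q) \<star> ?uX)"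
    using sq sqT by (simp add: D.vcomp_prefix2[OF GT_whiskered] slide_uX)
  also have "\<dots> = (?R \<star> D.id2 (P1 FA (idm C ?X))) \<bullet> (D.id2 (P1 FA a) \<star> D.id2 (P1 FB q) \<star> ?uX)"
    by (rule D.vcomp_prefix3[OF whisker_R]) (use sq sqT in simp_all)
  finally show ?thesis .
qed

lemma G_rho_square:
  assumes "f \<in> A" "f \<in> B"
  shows "G f (idm C (trg C f)) f (idm C (trg C f)) (idc C f)
    = (Pu FB (trg C f) \<star> D.id2 (P1 FA f)) \<bullet> \<rho> f \<bullet> (inv2 D (Pu FA (trg C f)) \<star> D.id2 (P1 FB f))"
proof -
  have [simp]: "f \<in> A" "f \<in> B" using assms by auto
  let ?u = "Pu FA (trg C f)" and ?v = "Pu FB (trg C f)"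
  let ?GE = "G f (idm C (trg C f)) f (idm C (trg C f)) (idc C f)"
  have v: "(?v \<star> D.id2 (P1 FA f)) \<bullet> (inv2 D ?v \<star> D.id2 (P1 FA f)) = D.id2 (P1 FB (idm C (trg C f)) \<diamond> P1 FA f)"
    using D.whisker_right_vcomp[of "inv2 D ?v" ?v "P1 FA f"] by simp
  have u: "(?u \<star> D.id2 (P1 FB f)) \<bullet> (inv2 D ?u \<star> D.id2 (P1 FB f)) = D.id2 (P1 FA (idm C (trg C f)) \<diamond> P1 FB f)"
    using D.whisker_right_vcomp[of "inv2 D ?u" ?u "P1 FB f"] by simp
  have "?GE = (?v \<star> D.id2 (P1 FA f)) \<bullet> (inv2 D ?v \<star> D.id2 (P1 FA f)) \<bullet> ?GE
      \<bullet> (?u \<star> D.id2 (P1 FB f)) \<bullet> (inv2 D ?u \<star> D.id2 (P1 FB f))"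
    using ab_square_rho[of f] by (simp add: D.vcomp_prefix2[OF v] u)
  then show ?thesis
    unfolding rho_def using ab_square_rho[of f] by simp
qed

lemma G_rho_square_inverse:
  assumes "f \<in> A" "f \<in> B"
  shows "G f (idm C (trg C f)) f (idm C (trg C f)) (idc C f) \<bullet> (Pu FA (trg C f) \<star> D.id2 (P1 FB f))
    \<bullet> inv2 D (\<rho> f) = Pu FB (trg C f) \<star> D.id2 (P1 FA f)"
proof -
  have [simp]: "f \<in> A" "f \<in> B" using assms by auto
  let ?u = "Pu FA (trg C f)" and ?v = "Pu FB (trg C f)"
  let ?GE = "G f (idm C (trg C f)) f (idm C (trg C f)) (idc C f)"
  have v: "(?v \<star> D.id2 (P1 FA f)) \<bullet> (inv2 D ?v \<star> D.id2 (P1 FA f)) = D.id2 (P1 FB (idm C (trg C f)) \<diamond> P1 FA f)"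
    using D.whisker_right_vcomp[of "inv2 D ?v" ?v "P1 FA f"] by simp
  have rho: "(?v \<star> D.id2 (P1 FA f)) \<bullet> \<rho> f = ?GE \<bullet> (?u \<star> D.id2 (P1 FB f))"
    unfolding rho_def using ab_square_rho[of f] by (simp add: D.vcomp_prefix2[OF v])
  have "?GE \<bullet> (?u \<star> D.id2 (P1 FB f)) \<bullet> inv2 D (\<rho> f) = (?v \<star> D.id2 (P1 FA f)) \<bullet> \<rho> f \<bullet> inv2 D (\<rho> f)"
    using ab_square_rho[of f] by (simp add: D.vcomp_prefix2[OF rho[symmetric]])
  then show ?thesis by simp
qed

lemma rho_inv_law_lhs_eq_G_top_identity:
  assumes sq: "ab_square C A B b a q p al" and "a \<in> B" "b \<in> B"
  shows "P2 FB al \<bullet> Pc FB a q \<bullet> (inv2 D (\<rho> a) \<star> D.id2 (P1 FB q))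
    = (D.id2 (P1 FB (cmp C p b)) \<star> inv2 D (Pu FA (src C b))) \<bullet> G (idm C (src C b)) a q (cmp C p b) al"
proof -
  have [simp]: "src C q = src C b" "src C p = trg C b" "src C a = trg C q" "trg C p = trg C a"
    "b \<in> A" "a \<in> A" "q \<in> B" "p \<in> B" "a \<in> B" "b \<in> B" "al \<in> Cel C" "dom2 C al = cmp C a q"
    "cod2 C al = cmp C p b"
    using ab_squareD[OF sq] assms by auto
  let ?W = "trg C a" and ?X = "src C b"
  let ?uX = "Pu FA ?X" and ?uW = "Pu FA ?W" and ?vW = "Pu FB ?W"
  let ?GS = "G (idm C ?X) a q (cmp C p b) al"
  let ?GS' = "G (idm C ?X) (idm C ?W) (cmp C a q) (cmp C p b) al"
  let ?GE = "G a (idm C ?W) a (idm C ?W) (idc C a)"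
  have sqS: "ab_square C A B (idm C ?X) a q (cmp C p b) al"
    unfolding ab_square_def by simp
  have sqS': "ab_square C A B (idm C ?X) (idm C ?W) (cmp C a q) (cmp C p b) al"
    unfolding ab_square_def by simp
  have sqE: "ab_square C A B a (idm C ?W) a (idm C ?W) (idc C a)"
    using ab_square_rho[of a] by simp
  have paste: "(Pc FB (idm C ?W) (cmp C p b) \<star> D.id2 (P1 FA (idm C ?X))) \<bullet> (D.id2 (P1 FB (idm C ?W)) \<star> ?GS)
      \<bullet> (?GE \<star> D.id2 (P1 FB q)) = ?GS' \<bullet> (D.id2 (P1 FA (idm C ?W)) \<star> Pc FB a q)"
    using G_paste_vertical[OF sqS sqE] by simp
  have trivial: "(D.id2 (P1 FB (cmp C p b)) \<star> inv2 D ?uX) \<bullet> ?GS'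
      \<bullet> (?uW \<star> D.id2 (P1 FB (cmp C a q))) = P2 FB al"
    using G_trivial_A_edges[of "cmp C a q" "cmp C p b" al] sqS' by simp
  have slide_Pc: "(?uW \<star> D.id2 (P1 FB (cmp C a q))) \<bullet> Pc FB a q
      = (D.id2 (P1 FA (idm C ?W)) \<star> Pc FB a q) \<bullet> (?uW \<star> D.id2 (P1 FB a \<diamond> P1 FB q))"
    using D.slide_right[of ?uW "Pc FB a q"] D.slide_left[of ?uW "Pc FB a q"] by simp
  have GE_whiskered: "(?GE \<star> D.id2 (P1 FB q)) \<bullet> (?uW \<star> D.id2 (P1 FB a \<diamond> P1 FB q))
      \<bullet> (inv2 D (\<rho> a) \<star> D.id2 (P1 FB q))
      = ?vW \<star> D.id2 (P1 FA a \<diamond> P1 FB q)"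
    using D.whisker_right_vcomp3[of ?GE "?uW \<star> D.id2 (P1 FB a)" "inv2 D (\<rho> a)" "P1 FB q"]
      G_rho_square_inverse[of a] sqE by simp
  have slide_vW: "(D.id2 (P1 FB (idm C ?W)) \<star> ?GS) \<bullet> (?vW \<star> D.id2 (P1 FA a \<diamond> P1 FB q))
      = (?vW \<star> D.id2 (P1 FB (cmp C p b) \<diamond> P1 FA (idm C ?X))) \<bullet> ?GS"
    using D.slide_right[of ?vW ?GS] D.slide_left[of ?vW ?GS] sqS by simp
  have unit_pb: "(Pc FB (idm C ?W) (cmp C p b) \<star> D.id2 (P1 FA (idm C ?X)))
      \<bullet> (?vW \<star> D.id2 (P1 FB (cmp C p b) \<diamond> P1 FA (idm C ?X))) = D.id2 (P1 FB (cmp C p b) \<diamond> P1 FA (idm C ?X))"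
    using D.whisker_right_vcomp[of "?vW \<star> D.id2 (P1 FB (cmp C p b))" "Pc FB (idm C ?W) (cmp C p b)" "P1 FA (idm C ?X)"]
      FB.Pc_unit_left[of "cmp C p b"] by simp
  have "P2 FB al \<bullet> Pc FB a q \<bullet> (inv2 D (\<rho> a) \<star> D.id2 (P1 FB q))
      = (D.id2 (P1 FB (cmp C p b)) \<star> inv2 D ?uX) \<bullet> (Pc FB (idm C ?W) (cmp C p b) \<star> D.id2 (P1 FA (idm C ?X)))
        \<bullet> (D.id2 (P1 FB (idm C ?W)) \<star> ?GS) \<bullet> (?GE \<star> D.id2 (P1 FB q))
        \<bullet> (?uW \<star> D.id2 (P1 FB a \<diamond> P1 FB q)) \<bullet> (inv2 D (\<rho> a) \<star> D.id2 (P1 FB q))"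
    using sqS' sqS sqE
    by (simp add: trivial[symmetric] D.vcomp_prefix2[OF slide_Pc] D.vcomp_prefix2[OF paste[symmetric]])
  also have "\<dots> = (D.id2 (P1 FB (cmp C p b)) \<star> inv2 D ?uX) \<bullet> ?GS"
    using sqS' sqS sqE by (simp only: GE_whiskered) (simp add: slide_vW D.vcomp_prefix2[OF unit_pb])
  finally show ?thesis .
qed

theorem rho_inv_square_law:
  assumes sq: "ab_square C A B b a q p al" and "a \<in> B" "b \<in> B"
  shows "P2 FB al \<bullet> Pc FB a q \<bullet> (inv2 D (\<rho> a) \<star> D.id2 (P1 FB q))
    = Pc FB p b \<bullet> (D.id2 (P1 FB p) \<star> inv2 D (\<rho> b)) \<bullet> G b a q p al"
proof -
  have [simp]: "src C q = src C b" "src C p = trg C b" "src C a = trg C q" "trg C p = trg C a"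
    "b \<in> A" "a \<in> A" "q \<in> B" "p \<in> B" "b \<in> B" "al \<in> Cel C" "dom2 C al = cmp C a q"
    "cod2 C al = cmp C p b"
    using ab_squareD[OF sq] assms by auto
  let ?uX = "Pu FA (src C b)"
  let ?R = "Pc FB p b \<bullet> (D.id2 (P1 FB p) \<star> inv2 D (\<rho> b)) \<bullet> G b a q p al"
  have slide: "(D.id2 (P1 FB (cmp C p b)) \<star> inv2 D ?uX) \<bullet> (?R \<star> D.id2 (P1 FA (idm C (src C b))))
      = ?R \<bullet> (D.id2 (P1 FA a) \<star> D.id2 (P1 FB q) \<star> inv2 D ?uX)"
    using D.slide_right[of ?R "inv2 D ?uX"] D.slide_left[of ?R "inv2 D ?uX"] sq by simp
  have cancel: "(D.id2 (P1 FA a) \<star> D.id2 (P1 FB q) \<star> inv2 D ?uX) \<bullet> (D.id2 (P1 FA a) \<star> D.id2 (P1 FB q) \<star> ?uX)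
      = D.id2 (P1 FA a \<diamond> P1 FB q)"
    using D.whisker_left_vcomp[of "D.id2 (P1 FB q) \<star> ?uX" "D.id2 (P1 FB q) \<star> inv2 D ?uX" "P1 FA a"]
      D.whisker_left_vcomp[of "?uX" "inv2 D ?uX" "P1 FB q"] by simp
  show ?thesis
    using sq assms(2,3)
    by (simp add: rho_inv_law_lhs_eq_G_top_identity G_top_identity_factor[OF sq] D.vcomp_prefix2[OF slide] cancel)
qed

theorem rho_natural:
  assumes al: "al \<in> Cel C" and f: "dom2 C al \<in> A" "dom2 C al \<in> B" and g: "cod2 C al \<in> A" "cod2 C al \<in> B"
  shows "P2 FA al \<bullet> \<rho> (dom2 C al) = \<rho> (cod2 C al) \<bullet> P2 FB al"
proof -
  define f g where "f = dom2 C al" and "g = cod2 C al"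
  have [simp]: "src C g = src C f" "trg C g = trg C f" "dom2 C al = f" "cod2 C al = g"
    "f \<in> A" "f \<in> B" "g \<in> A" "g \<in> B" "al \<in> Cel C"
    using assms C.Cel_props[OF al] unfolding f_def g_def by auto
  let ?X = "src C f" and ?Y = "trg C f"
  let ?G = "G (idm C ?X) (idm C ?Y) f g al"
  have sq: "ab_square C A B (idm C ?X) (idm C ?Y) f g al"
    unfolding ab_square_def by simp
  have law: "P2 FA al \<bullet> Pc FA (idm C ?Y) f \<bullet> (D.id2 (P1 FA (idm C ?Y)) \<star> \<rho> f)
      = Pc FA g (idm C ?X) \<bullet> (\<rho> g \<star> D.id2 (P1 FA (idm C ?X))) \<bullet> ?G"
    using rho_square_law[OF sq] by simp
  have trivial: "?G \<bullet> (Pu FA ?Y \<star> D.id2 (P1 FB f)) = (D.id2 (P1 FB g) \<star> Pu FA ?X) \<bullet> P2 FB al"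
    using G_trivial_A_edges_right[of f g al] sq by simp
  have slide_rho_f: "(D.id2 (P1 FA (idm C ?Y)) \<star> \<rho> f) \<bullet> (Pu FA ?Y \<star> D.id2 (P1 FB f))
      = (Pu FA ?Y \<star> D.id2 (P1 FA f)) \<bullet> \<rho> f"
    using D.slide_right[of "Pu FA ?Y" "\<rho> f"] D.slide_left[of "Pu FA ?Y" "\<rho> f"] by simp
  have slide_rho_g: "(\<rho> g \<star> D.id2 (P1 FA (idm C ?X))) \<bullet> (D.id2 (P1 FB g) \<star> Pu FA ?X)
      = (D.id2 (P1 FA g) \<star> Pu FA ?X) \<bullet> \<rho> g"
    using D.slide_right[of "\<rho> g" "Pu FA ?X"] D.slide_left[of "\<rho> g" "Pu FA ?X"] by simp
  have unit_g: "Pc FA g (idm C ?X) \<bullet> (D.id2 (P1 FA g) \<star> Pu FA ?X) = D.id2 (P1 FA g)"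
    using FA.Pc_unit_right[of g] by simp
  have "P2 FA al \<bullet> \<rho> f
      = P2 FA al \<bullet> Pc FA (idm C ?Y) f \<bullet> (D.id2 (P1 FA (idm C ?Y)) \<star> \<rho> f) \<bullet> (Pu FA ?Y \<star> D.id2 (P1 FB f))"
    by (simp add: slide_rho_f D.vcomp_prefix2[OF FA.Pc_unit_left[of f]])
  also have "\<dots> = Pc FA g (idm C ?X) \<bullet> (\<rho> g \<star> D.id2 (P1 FA (idm C ?X))) \<bullet> ?G \<bullet> (Pu FA ?Y \<star> D.id2 (P1 FB f))"
    using sq by (simp add: D.vcomp_prefix3[OF law])
  also have "\<dots> = \<rho> g \<bullet> P2 FB al"
    using sq by (simp add: trivial D.vcomp_prefix2[OF slide_rho_g] D.vcomp_prefix2[OF unit_g])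
  finally show ?thesis
    unfolding f_def g_def .
qed

theorem rho_comp:
  assumes "f \<in> A" "f \<in> B" "g \<in> A" "g \<in> B" "trg C f = src C g"
  shows "\<rho> (cmp C g f) \<bullet> Pc FB g f = Pc FA g f \<bullet> (D.id2 (P1 FA g) \<star> \<rho> f) \<bullet> (\<rho> g \<star> D.id2 (P1 FB f))"
proof -
  have [simp]: "f \<in> A" "f \<in> B" "g \<in> A" "g \<in> B" "src C g = trg C f"
    using assms by auto
  let ?Z = "trg C g" and ?gf = "cmp C g f"
  let ?uZ = "Pu FA ?Z" and ?vZ = "Pu FB ?Z"
  let ?G = "G ?gf g f (idm C ?Z) (idc C ?gf)"
  let ?Eg = "G g (idm C ?Z) g (idm C ?Z) (idc C g)"
  let ?Q = "Pc FA g f \<bullet> (D.id2 (P1 FA g) \<star> \<rho> f) \<bullet> (\<rho> g \<star> D.id2 (P1 FB f))"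
  let ?W = "inv2 D ?uZ \<star> D.id2 (P1 FB g \<diamond> P1 FB f)"
  have sq: "ab_square C A B ?gf g f (idm C ?Z) (idc C ?gf)"
    unfolding ab_square_def by simp
  have sqg: "ab_square C A B g (idm C ?Z) g (idm C ?Z) (idc C g)"
    using ab_square_rho[of g] by simp
  have paste: "(Pc FB (idm C ?Z) (idm C ?Z) \<star> D.id2 (P1 FA ?gf)) \<bullet> (D.id2 (P1 FB (idm C ?Z)) \<star> ?G)
      \<bullet> (?Eg \<star> D.id2 (P1 FB f)) = G ?gf (idm C ?Z) ?gf (idm C ?Z) (idc C ?gf) \<bullet> (D.id2 (P1 FA (idm C ?Z)) \<star> Pc FB g f)"
    using G_paste_vertical[OF sq sqg] by simp
  have G_whiskered: "D.id2 (P1 FB (idm C ?Z)) \<star> ?G = (D.id2 (P1 FB (idm C ?Z)) \<star> ?vZ \<star> D.id2 (P1 FA ?gf))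
      \<bullet> (D.id2 (P1 FB (idm C ?Z)) \<star> Pc FA g f) \<bullet> (D.id2 (P1 FB (idm C ?Z)) \<star> D.id2 (P1 FA g) \<star> \<rho> f)"
    using G_eq_G_triangle[OF sq] G_triangle_comp[of g f] by simp (subst D.whisker_left_vcomp3; simp)
  have GE_whiskered: "?Eg \<star> D.id2 (P1 FB f) = (?vZ \<star> D.id2 (P1 FA g \<diamond> P1 FB f)) \<bullet> (\<rho> g \<star> D.id2 (P1 FB f))
      \<bullet> (inv2 D ?uZ \<star> D.id2 (P1 FB g \<diamond> P1 FB f))"
    by (simp only: G_rho_square[OF assms(3,4)]) (subst D.whisker_right_vcomp3; simp)
  have unit_Z: "(Pc FB (idm C ?Z) (idm C ?Z) \<star> D.id2 (P1 FA ?gf))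
      \<bullet> (D.id2 (P1 FB (idm C ?Z)) \<star> ?vZ \<star> D.id2 (P1 FA ?gf))
      = D.id2 (P1 FB (idm C ?Z) \<diamond> P1 FA ?gf)"
    using D.whisker_right_vcomp[of "D.id2 (P1 FB (idm C ?Z)) \<star> ?vZ" "Pc FB (idm C ?Z) (idm C ?Z)" "P1 FA ?gf"]
      FB.Pc_unit_right[of "idm C ?Z"] by simp
  have slide_rho_f: "(D.id2 (P1 FB (idm C ?Z)) \<star> D.id2 (P1 FA g) \<star> \<rho> f) \<bullet> (?vZ \<star> D.id2 (P1 FA g \<diamond> P1 FB f))
      = (?vZ \<star> D.id2 (P1 FA g \<diamond> P1 FA f)) \<bullet> (D.id2 (P1 FA g) \<star> \<rho> f)"
    using D.slide_right[of ?vZ "D.id2 (P1 FA g) \<star> \<rho> f"] D.slide_left[of ?vZ "D.id2 (P1 FA g) \<star> \<rho> f"] by simp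
  have slide_PcA: "(D.id2 (P1 FB (idm C ?Z)) \<star> Pc FA g f) \<bullet> (?vZ \<star> D.id2 (P1 FA g \<diamond> P1 FA f))
      = (?vZ \<star> D.id2 (P1 FA ?gf)) \<bullet> Pc FA g f"
    using D.slide_right[of ?vZ "Pc FA g f"] D.slide_left[of ?vZ "Pc FA g f"] by simp
  have Egf: "G ?gf (idm C ?Z) ?gf (idm C ?Z) (idc C ?gf)
      = (?vZ \<star> D.id2 (P1 FA ?gf)) \<bullet> \<rho> ?gf \<bullet> (inv2 D ?uZ \<star> D.id2 (P1 FB ?gf))"
    using G_rho_square[of ?gf] by simp
  have slide_PcB: "(inv2 D ?uZ \<star> D.id2 (P1 FB ?gf)) \<bullet> (D.id2 (P1 FA (idm C ?Z)) \<star> Pc FB g f) = Pc FB g f \<bullet> ?W"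
    using D.slide_right[of "inv2 D ?uZ" "Pc FB g f"] D.slide_left[of "inv2 D ?uZ" "Pc FB g f"] by simp
  have "(?vZ \<star> D.id2 (P1 FA ?gf)) \<bullet> ?Q \<bullet> ?W
      = (Pc FB (idm C ?Z) (idm C ?Z) \<star> D.id2 (P1 FA ?gf)) \<bullet> (D.id2 (P1 FB (idm C ?Z)) \<star> ?G) \<bullet> (?Eg \<star> D.id2 (P1 FB f))"
    using sq sqg
    by (simp add: G_whiskered GE_whiskered D.vcomp_prefix2[OF unit_Z] D.vcomp_prefix2[OF slide_rho_f] D.vcomp_prefix2[OF slide_PcA])
  also have "\<dots> = (?vZ \<star> D.id2 (P1 FA ?gf)) \<bullet> \<rho> ?gf \<bullet> Pc FB g f \<bullet> ?W"
    using ab_square_rho[of ?gf] by (simp add: paste Egf slide_PcB)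
  finally have eq: "(?vZ \<star> D.id2 (P1 FA ?gf)) \<bullet> ?Q \<bullet> ?W = (?vZ \<star> D.id2 (P1 FA ?gf)) \<bullet> \<rho> ?gf
      \<bullet> Pc FB g f \<bullet> ?W" .
  have eq': "?Q \<bullet> ?W = (\<rho> ?gf \<bullet> Pc FB g f) \<bullet> ?W"
    by (rule D.iso2_cancel_left[of "?vZ \<star> D.id2 (P1 FA ?gf)"]) (use eq in simp_all)
  have "?Q = \<rho> ?gf \<bullet> Pc FB g f"
    by (rule D.iso2_cancel_right[of ?W]) (use eq' in simp_all)
  then show ?thesis by simp
qed

theorem rho_pseudonat: "pseudonat C (A \<inter> B) D FB FA (\<lambda>X. idm D (P0 FA X)) \<rho>"
  unfolding pseudonat_def
proof (intro conjI ballI impI)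
  show "pseudofunctor C (A \<inter> B) D FB" by (rule FB.pseudofunctor_restrict) auto
  show "pseudofunctor C (A \<inter> B) D FA" by (rule FA.pseudofunctor_restrict) auto
next
  fix X assume X: "X \<in> Obj C"
  show "idm D (P0 FA X) \<in> Mor D" "src D (idm D (P0 FA X)) = P0 FB X" "trg D (idm D (P0 FA X)) = P0 FA X"
    using X by simp_all
  show "\<rho> (idm C X) \<bullet> (D.id2 (idm D (P0 FA X)) \<star> Pu FB X) = Pu FA X \<star> D.id2 (idm D (P0 FA X))"
    using X rho_idm_Pu[OF X] by simp
next
  fix f assume f: "f \<in> A \<inter> B"
  show "iso2 D (\<rho> f)" "dom2 D (\<rho> f) = idm D (P0 FA (trg C f)) \<diamond> P1 FB f"
    "cod2 D (\<rho> f) = P1 FA f \<diamond> idm D (P0 FA (src C f))" using f by simp_all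
next
  fix a assume a: "a \<in> cells_in C (A \<inter> B)"
  then have cell: "a \<in> Cel C" "dom2 C a \<in> A" "dom2 C a \<in> B" "cod2 C a \<in> A" "cod2 C a \<in> B" unfolding cells_in_def by auto
  have natural: "P2 FA a \<bullet> \<rho> (dom2 C a) = \<rho> (cod2 C a) \<bullet> P2 FB a" using rho_natural cell by simp
  show "\<rho> (cod2 C a) \<bullet> (D.id2 (idm D (P0 FA (trg C (dom2 C a)))) \<star> P2 FB a) =
        (P2 FA a \<star> D.id2 (idm D (P0 FA (src C (dom2 C a))))) \<bullet> \<rho> (dom2 C a)"
    using cell natural by simp
next
  fix f g assume f: "f \<in> A \<inter> B" and g: "g \<in> A \<inter> B" and fg: "trg C f = src C g"
  show "\<rho> (cmp C g f) \<bullet> (D.id2 (idm D (P0 FA (trg C g))) \<star> Pc FB g f) =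
        (Pc FA g f \<star> D.id2 (idm D (P0 FA (src C f)))) \<bullet> (D.id2 (P1 FA g) \<star> \<rho> f) \<bullet> (\<rho> g \<star> D.id2 (P1 FB f))"
    using rho_comp[of f g] f g fg by simp
qed

lemma rho_inv_pseudonat: "pseudonat C (A \<inter> B) D FA FB (\<lambda>X. idm D (P0 FA X)) (\<lambda>f. inv2 D (\<rho> f))"
  unfolding pseudonat_def
proof (intro conjI ballI impI)
  show "pseudofunctor C (A \<inter> B) D FB" by (rule FB.pseudofunctor_restrict) auto
  show "pseudofunctor C (A \<inter> B) D FA" by (rule FA.pseudofunctor_restrict) auto
next
  fix X assume X: "X \<in> Obj C"
  show "idm D (P0 FA X) \<in> Mor D" "src D (idm D (P0 FA X)) = P0 FA X" "trg D (idm D (P0 FA X)) = P0 FB X"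
    using X by simp_all
  have "inv2 D (\<rho> (idm C X)) \<bullet> Pu FA X = Pu FB X"
    using X rho_idm_Pu[OF X] D.inv2_comp_left_assoc[of "\<rho> (idm C X)" "Pu FB X"] by simp
  then show "inv2 D (\<rho> (idm C X)) \<bullet> (D.id2 (idm D (P0 FA X)) \<star> Pu FA X) = Pu FB X \<star> D.id2 (idm D (P0 FA X))"
    using X by simp
next
  fix f assume f: "f \<in> A \<inter> B"
  show "iso2 D (inv2 D (\<rho> f))" "dom2 D (inv2 D (\<rho> f)) = idm D (P0 FA (trg C f)) \<diamond> P1 FA f"
    "cod2 D (inv2 D (\<rho> f)) = P1 FB f \<diamond> idm D (P0 FA (src C f))" using f by simp_all
next
  fix a assume a: "a \<in> cells_in C (A \<inter> B)"
  then have cell: "a \<in> Cel C" "dom2 C a \<in> A" "dom2 C a \<in> B" "cod2 C a \<in> A" "cod2 C a \<in> B" unfolding cells_in_def by auto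
  have natural: "P2 FA a \<bullet> \<rho> (dom2 C a) = \<rho> (cod2 C a) \<bullet> P2 FB a" using rho_natural cell by simp
  have natural_inv: "inv2 D (\<rho> (cod2 C a)) \<bullet> P2 FA a = P2 FB a \<bullet> inv2 D (\<rho> (dom2 C a))"
    by (rule D.inv2_conjugate[OF _ _ _ _ _ _ _ _ natural]) (use cell in \<open>simp_all add: D.iso2_Cel\<close>)
  show "inv2 D (\<rho> (cod2 C a)) \<bullet> (D.id2 (idm D (P0 FA (trg C (dom2 C a)))) \<star> P2 FA a) =
        (P2 FB a \<star> D.id2 (idm D (P0 FA (src C (dom2 C a))))) \<bullet> inv2 D (\<rho> (dom2 C a))"
    using cell natural_inv by simp
next
  fix f g assume f: "f \<in> A \<inter> B" and g: "g \<in> A \<inter> B" and fg: "trg C f = src C g"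
  have comp: "Pc FA g f \<bullet> ((D.id2 (P1 FA g) \<star> \<rho> f) \<bullet> (\<rho> g \<star> D.id2 (P1 FB f))) = \<rho> (cmp C g f) \<bullet> Pc FB g f"
    using rho_comp[of f g] f g fg by simp
  have rho_hcomp: "(D.id2 (P1 FA g) \<star> \<rho> f) \<bullet> (\<rho> g \<star> D.id2 (P1 FB f)) = \<rho> g \<star> \<rho> f"
    using D.slide_left[of "\<rho> g" "\<rho> f"] f g fg by simp
  have rho_inv_hcomp: "(D.id2 (P1 FB g) \<star> inv2 D (\<rho> f)) \<bullet> (inv2 D (\<rho> g) \<star> D.id2 (P1 FA f))
      = inv2 D (\<rho> g) \<star> inv2 D (\<rho> f)"
    using D.slide_left[of "inv2 D (\<rho> g)" "inv2 D (\<rho> f)"] f g fg by simp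
  have comp_inv: "inv2 D (\<rho> (cmp C g f)) \<bullet> Pc FA g f = Pc FB g f \<bullet> inv2 D ((D.id2 (P1 FA g) \<star> \<rho> f)
      \<bullet> (\<rho> g \<star> D.id2 (P1 FB f)))"
    by (rule D.inv2_conjugate[OF _ _ _ _ _ _ _ _ comp]) (use f g fg in \<open>simp_all add: rho_hcomp D.iso2_Cel\<close>)
  show "inv2 D (\<rho> (cmp C g f)) \<bullet> (D.id2 (idm D (P0 FA (trg C g))) \<star> Pc FA g f) =
        (Pc FB g f \<star> D.id2 (idm D (P0 FA (src C f)))) \<bullet> (D.id2 (P1 FB g) \<star> inv2 D (\<rho> f)) \<bullet> (inv2 D (\<rho> g) \<star> D.id2 (P1 FA f))"
    using comp_inv f g fg by (simp add: rho_hcomp rho_inv_hcomp)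
qed

theorem rho_invertible_pseudonat: "invertible_pseudonat C (A \<inter> B) D FB FA (\<lambda>X. idm D (P0 FA X)) \<rho>"
  unfolding invertible_pseudonat_def using rho_pseudonat rho_inv_pseudonat
  by (intro conjI exI[of _ "\<lambda>X. idm D (P0 FA X)"] exI[of _ "\<lambda>f. inv2 D (\<rho> f)"]) simp_all

end

theorem mainTheorem8:
  fixes C :: "('o,'m,'c) tcat" and D :: "('p,'n,'d) tcat"
    and A B :: "'m set"
    and FA FB :: "('o,'m,'c,'p,'n,'d) psf"
    and G :: "'m \<Rightarrow> 'm \<Rightarrow> 'm \<Rightarrow> 'm \<Rightarrow> 'c \<Rightarrow> 'd"
  assumes "two_one_cat C"
    and "arrowy_sub C A" and "arrowy_sub C B"
    and "twocat D"
    and "GD_obj C A B D FA FB G"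
  shows "invertible_pseudonat C (A \<inter> B) D FB FA (\<lambda>X. idm D (P0 FA X)) (rho C D FA FB G)
    \<and> (\<forall>b a q p al. ab_square C A B b a q p al \<longrightarrow> q \<in> A \<inter> B \<longrightarrow> p \<in> A \<inter> B \<longrightarrow>
          vcmp D (P2 FA al) (vcmp D (Pc FA a q) (hcmp D (idc D (P1 FA a)) (rho C D FA FB G q)))
          = vcmp D (Pc FA p b) (vcmp D (hcmp D (rho C D FA FB G p) (idc D (P1 FA b))) (G b a q p al)))
    \<and> (\<forall>b a q p al. ab_square C A B b a q p al \<longrightarrow> a \<in> A \<inter> B \<longrightarrow> b \<in> A \<inter> B \<longrightarrow>
          vcmp D (P2 FB al) (vcmp D (Pc FB a q) (hcmp D (inv2 D (rho C D FA FB G a)) (idc D (P1 FB q))))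
          = vcmp D (Pc FB p b) (vcmp D (hcmp D (idc D (P1 FB p)) (inv2 D (rho C D FA FB G b))) (G b a q p al)))"
proof -
  interpret GD_object C D A B FA FB G
    using assms unfolding GD_object_def GD_object_axioms_def two_category_def two_one_cat_def by simp
  show ?thesis
    using rho_invertible_pseudonat rho_square_law rho_inv_square_law by blast
qed

end
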